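(* For any probability measure $\mu$ on $[0,1]^2$ and $n\in\mathbb N$, let $\mu_n=\frac1n\sum_{i=1}^n\delta_{X_i}$ with $X_1,\dots,X_n$ iid from $\mu$. Then $\mathbb E\sup_{S,T\subseteq[0,1]\text{ intervals}}|\mu(S\times T)-\mu_n(S\times T)|\le\frac{174}{\sqrt n}$. *)

theory Defs
  imports "HOL-Probability.Probability"
begin

definition empirical :: "nat \<Rightarrow> (nat \<Rightarrow> 'a) \<Rightarrow> 'a set \<Rightarrow> real" where
  "empirical n X A = real (card {i\<in>{..<n}. X i \<in> A}) / real n"

text \<open>Subintervals of [0,1] (possibly empty or degenerate, any endpoint type).\<close>
definition unit_subintervals :: "real set set" where
  "unit_subintervals = {S. is_interval S \<and> S \<subseteq> {0..1}}"

end

theory Submission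
  imports Defs
begin

(*
  On a set A of measure at most P, n times the deviation mu(A) - mu_n(A) is a sum of n independent
  centred Bernoulli variables, so its exponential moments at inverse temperature s <= 1 are at
  most exp (n P s^2). A log-sum-exp bound then controls the expected maximum of |mu(A) - mu_n(A)|
  over N such sets by (ln (2 N) + n P s^2 + 1) / (s n).

  Atoms are removed by the distributional transform: a coordinate x is replaced by
  F(x-) + V (F(x) - F(x-)) with one auxiliary uniform variable V. The transformed coordinates
  have laws dominated by Lebesgue measure on [0,1], and a rectangle of intervals S x T becomes a set
  squeezed between an open and a closed rectangle in transformed coordinates. Such a set is
  approximated from inside by dyadic boxes of levels m <= K; consecutive boxes differ by one of
  (2^m + 3)^8 sets of measure at most 4 / 2^m, and so does the outer box of level K from the inner
  one. Chaining with inverse temperatures s_m = 2 (3/2)^m / sqrt n turns the level bounds into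
  geometric series with sum at most 132 / sqrt n; for n < 4 the trivial bound 1 suffices.
*)

section \<open>Exponential moments and a maximal inequality\<close>

lemma exp_le_quadratic:
  fixes x :: real
  assumes "\<bar>x\<bar> \<le> 1"
  shows "exp x \<le> 1 + x + x\<^sup>2"
proof (cases "0 \<le> x")
  case True
  then show ?thesis using exp_bound assms by simp
next
  case False
  define y where "y = - x"
  have y: "0 \<le> y" "y \<le> 1" using False assms by (auto simp: y_def)
  have "1 \<le> 1 + (y\<^sup>2 + y ^ 3 + y ^ 4) / 2" using y by simp
  also have "\<dots> = (1 - y + y\<^sup>2) * (1 + y + y\<^sup>2 / 2)"
    by (simp add: field_simps power2_eq_square power3_eq_cube power4_eq_xxxx)
  also have "\<dots> \<le> (1 - y + y\<^sup>2) * exp y"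
    using exp_lower_Taylor_quadratic[OF y(1)] y by (intro mult_left_mono) auto
  finally have "1 / exp y \<le> 1 - y + y\<^sup>2" by (simp add: field_simps)
  then show ?thesis by (simp add: y_def exp_minus field_simps)
qed

lemma centered_bernoulli_mgf_le:
  fixes p t :: real
  assumes p: "0 \<le> p" "p \<le> 1" and t: "\<bar>t\<bar> \<le> 1"
  shows "p * exp (t * (p - 1)) + (1 - p) * exp (t * p) \<le> exp (p * t\<^sup>2)"
proof -
  have "exp (t * (p - 1)) = exp (t * p) * exp (- t)"
    by (simp add: exp_add[symmetric] right_diff_distrib)
  then have "p * exp (t * (p - 1)) + (1 - p) * exp (t * p) = exp (t * p) * (1 + p * (exp (- t) - 1))"
    by (simp add: algebra_simps)
  also have "\<dots> \<le> exp (t * p) * (1 + p * (- t + t\<^sup>2))"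
  proof -
    have "exp (- t) - 1 \<le> - t + t\<^sup>2"
      using exp_le_quadratic[of "- t"] t by simp
    then show ?thesis
      using p by (intro mult_left_mono add_left_mono) simp_all
  qed
  also have "\<dots> \<le> exp (t * p) * exp (p * (- t + t\<^sup>2))"
    by (intro mult_left_mono) (simp_all add: exp_ge_add_one_self)
  also have "\<dots> = exp (p * t\<^sup>2)"
    by (simp add: exp_add[symmetric] algebra_simps)
  finally show ?thesis .
qed

definition deviation :: "'a measure \<Rightarrow> nat \<Rightarrow> (nat \<Rightarrow> 'a) \<Rightarrow> 'a set \<Rightarrow> real" where
  "deviation M n X A = measure M A - empirical n X A"

lemma empirical_eq_sum_indicator:
  "empirical n X A = (\<Sum>i<n. indicator A (X i)) / real n"
proof -
  have "real (card {i\<in>{..<n}. X i \<in> A}) = (\<Sum>i\<in>{i\<in>{..<n}. X i \<in> A}. 1)"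
    by simp
  also have "\<dots> = (\<Sum>i<n. indicator A (X i))"
    by (simp add: sum.inter_filter indicator_def) (intro arg_cong[where f = card], blast)
  finally show ?thesis by (simp add: empirical_def)
qed

lemma scaled_deviation_eq_sum:
  "real n * deviation M n X A = (\<Sum>i<n. measure M A - indicator A (X i))"
  by (cases "n = 0") (simp_all add: deviation_def empirical_eq_sum_indicator sum_subtractf right_diff_distrib)

lemma measurable_deviation [measurable]:
  assumes [measurable]: "A \<in> sets M"
  shows "(\<lambda>X. deviation M n X A) \<in> borel_measurable (PiM {..<n} (\<lambda>_. M))"
  unfolding deviation_def empirical_eq_sum_indicator by measurable

lemma deviation_Diff:
  assumes "finite_measure M" "A \<subseteq> B" "A \<in> sets M" "B \<in> sets M"
  shows "deviation M n X B = deviation M n X A + deviation M n X (B - A)"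
proof -
  have "measure M (B - A) = measure M B - measure M A"
    using assms by (simp add: finite_measure.finite_measure_Diff)
  moreover have "(\<Sum>i<n. indicator B (X i)) = (\<Sum>i<n. indicator A (X i) + indicator (B - A) (X i) :: real)"
    using assms(2) by (intro sum.cong) (auto simp: indicator_def)
  ultimately show ?thesis
    by (simp add: deviation_def empirical_eq_sum_indicator sum.distrib add_divide_distrib)
qed

lemma abs_deviation_le_of_subset:
  assumes "finite_measure M" "A \<subseteq> B" "B \<in> sets M"
  shows "\<bar>deviation M n X A\<bar> \<le> measure M B + \<bar>deviation M n X B\<bar>"
proof -
  have "0 \<le> measure M A" "measure M A \<le> measure M B"
    using assms by (auto intro: finite_measure.finite_measure_mono)
  moreover have "0 \<le> empirical n X A" "empirical n X A \<le> empirical n X B"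
    using assms(2) unfolding empirical_def by (auto intro!: divide_right_mono card_mono)
  ultimately show ?thesis unfolding deviation_def by (smt (verit) measure_nonneg)
qed

lemma (in prob_space) nn_integral_exp_scaled_deviation_le:
  assumes A: "A \<in> events" and t: "\<bar>t\<bar> \<le> 1"
  shows "(\<integral>\<^sup>+X. exp (t * (real n * deviation M n X A)) \<partial>PiM {..<n} (\<lambda>_. M))
           \<le> exp (real n * prob A * t\<^sup>2)"
proof -
  interpret P: product_prob_space "\<lambda>_. M" ..
  define p where "p = prob A"
  have p: "0 \<le> p" "p \<le> 1" by (auto simp: p_def)
  define g where "g \<omega> = ennreal (exp (t * (p - indicator A \<omega>)))" for \<omega>
  have [measurable]: "g \<in> borel_measurable M" unfolding g_def using A by measurable
  have "integral\<^sup>N M g = (\<integral>\<^sup>+\<omega>. ennreal (exp (t * (p - 1))) * indicator A \<omega>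
           + ennreal (exp (t * p)) * indicator (space M - A) \<omega> \<partial>M)"
    by (intro nn_integral_cong) (auto simp: g_def indicator_def)
  also have "\<dots> = ennreal (exp (t * (p - 1))) * emeasure M A + ennreal (exp (t * p)) * emeasure M (space M - A)"
    using A by (subst nn_integral_add) (auto simp: nn_integral_cmult_indicator)
  also have "\<dots> = ennreal (p * exp (t * (p - 1)) + (1 - p) * exp (t * p))"
    using A p by (simp add: emeasure_eq_measure prob_compl p_def ennreal_mult ennreal_plus mult.commute)
  finally have g: "integral\<^sup>N M g \<le> ennreal (exp (p * t\<^sup>2))"
    using centered_bernoulli_mgf_le[OF p t] by (simp add: ennreal_leI)
  have "(\<integral>\<^sup>+X. exp (t * (real n * deviation M n X A)) \<partial>PiM {..<n} (\<lambda>_. M))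
      = (\<integral>\<^sup>+X. (\<Prod>i<n. g (X i)) \<partial>PiM {..<n} (\<lambda>_. M))"
    by (intro nn_integral_cong)
      (simp add: scaled_deviation_eq_sum g_def p_def sum_distrib_left exp_sum prod_ennreal)
  also have "\<dots> = (integral\<^sup>N M g) ^ n"
    by (subst P.product_nn_integral_prod) auto
  also have "\<dots> \<le> ennreal (exp (p * t\<^sup>2)) ^ n"
    by (intro power_mono g) simp
  also have "\<dots> = ennreal (exp (real n * p * t\<^sup>2))"
    by (simp add: ennreal_power exp_of_nat_mult[symmetric] mult.assoc)
  finally show ?thesis by (simp add: p_def)
qed

lemma abs_le_log_sum_exp:
  fixes a :: "'i \<Rightarrow> real"
  assumes "finite F" "i \<in> F" "l > 0" "c > 0"
  shows "\<bar>a i\<bar> \<le> ((\<Sum>j\<in>F. exp (l * a j) + exp (- (l * a j))) / c + ln c) / l"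
proof -
  define Z where "Z = (\<Sum>j\<in>F. exp (l * a j) + exp (- (l * a j)))"
  have "exp \<bar>l * a i\<bar> \<le> exp (l * a i) + exp (- (l * a i))"
    by (cases "0 \<le> l * a i") (auto simp: add_increasing add_increasing2 less_imp_le)
  also have "\<dots> \<le> Z"
    unfolding Z_def using assms(1,2) by (intro member_le_sum) (auto intro: add_nonneg_nonneg)
  finally have Z: "exp \<bar>l * a i\<bar> \<le> Z" .
  then have "0 < Z" by (meson exp_gt_zero less_le_trans)
  from Z have "\<bar>l * a i\<bar> \<le> ln Z"
    using \<open>0 < Z\<close> by (metis exp_le_cancel_iff exp_ln)
  also have "\<dots> \<le> Z / c + ln c"
    using ln_le_minus_one[of "Z / c"] \<open>0 < Z\<close> assms(4) by (simp add: ln_div)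
  finally show ?thesis
    using assms(3) by (simp add: Z_def abs_mult pos_le_divide_eq mult.commute)
qed

text \<open>
  Log-sum-exp smoothing of the maximum of the absolute deviations over F, at inverse temperature
  s * n; the parameter P is meant to bound the measures of the members of F.
\<close>
definition deviation_soft_max ::
    "'a measure \<Rightarrow> nat \<Rightarrow> 'a set set \<Rightarrow> real \<Rightarrow> real \<Rightarrow> (nat \<Rightarrow> 'a) \<Rightarrow> real" where
  "deviation_soft_max M n F s P X =
     (let c = 2 * real (card F) * exp (real n * P * s\<^sup>2)
      in ((\<Sum>A\<in>F. exp (s * real n * deviation M n X A) + exp (- (s * real n * deviation M n X A))) / c
          + ln c) / (s * real n))"

lemma abs_deviation_le_soft_max:
  assumes "finite F" "A \<in> F" "s > 0" "n > 0"
  shows "\<bar>deviation M n X A\<bar> \<le> deviation_soft_max M n F s P X"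
proof -
  have "card F > 0" using assms(1,2) card_gt_0_iff by blast
  show ?thesis
    unfolding deviation_soft_max_def Let_def using assms \<open>card F > 0\<close>
    by (intro abs_le_log_sum_exp[where a = "deviation M n X" and l = "s * real n"]) auto
qed

lemma measurable_deviation_soft_max [measurable]:
  assumes "F \<subseteq> sets M"
  shows "deviation_soft_max M n F s P \<in> borel_measurable (PiM {..<n} (\<lambda>_. M))"
proof -
  have [measurable]: "A \<in> sets M" if "A \<in> F" for A using that assms by auto
  show ?thesis unfolding deviation_soft_max_def Let_def by measurable
qed

lemma (in prob_space) nn_integral_sum_exp_deviation_le:
  assumes F: "finite F" "F \<subseteq> events" and P: "\<And>A. A \<in> F \<Longrightarrow> prob A \<le> P"
    and s: "0 < s" "s \<le> 1"
  shows "(\<integral>\<^sup>+X. (\<Sum>A\<in>F. exp (s * real n * deviation M n X A) + exp (- (s * real n * deviation M n X A)))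
            \<partial>PiM {..<n} (\<lambda>_. M))
         \<le> 2 * real (card F) * exp (real n * P * s\<^sup>2)"
proof -
  define e where "e = exp (real n * P * s\<^sup>2)"
  have exp_bound: "(\<integral>\<^sup>+X. exp (t * (real n * deviation M n X A)) \<partial>PiM {..<n} (\<lambda>_. M)) \<le> e"
    if "A \<in> F" "\<bar>t\<bar> = s" for A t
  proof -
    have "t\<^sup>2 = s\<^sup>2" using \<open>\<bar>t\<bar> = s\<close> by (metis power2_abs)
    then have "real n * prob A * t\<^sup>2 \<le> real n * P * s\<^sup>2"
      using P[OF \<open>A \<in> F\<close>] by (simp add: mult_right_mono mult_left_mono)
    then have "ennreal (exp (real n * prob A * t\<^sup>2)) \<le> e"
      by (simp add: e_def ennreal_leI)
    then show ?thesis
      using nn_integral_exp_scaled_deviation_le[of A t n] that F s by (auto intro: order_trans)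
  qed
  have "(\<integral>\<^sup>+X. (\<Sum>A\<in>F. exp (s * real n * deviation M n X A) + exp (- (s * real n * deviation M n X A)))
            \<partial>PiM {..<n} (\<lambda>_. M))
      = (\<Sum>A\<in>F. (\<integral>\<^sup>+X. exp (s * (real n * deviation M n X A)) \<partial>PiM {..<n} (\<lambda>_. M))
                + (\<integral>\<^sup>+X. exp ((- s) * (real n * deviation M n X A)) \<partial>PiM {..<n} (\<lambda>_. M)))"
    using F by (simp add: sum_ennreal[symmetric] mult.assoc nn_integral_add nn_integral_sum subset_eq
        del: sum_ennreal)
  also have "\<dots> \<le> (\<Sum>A\<in>F. ennreal e + ennreal e)"
    using s by (intro sum_mono add_mono exp_bound) auto
  also have "\<dots> = (\<Sum>A\<in>F. ennreal (e + e))"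
    by (simp add: e_def ennreal_plus[symmetric] del: ennreal_plus)
  also have "\<dots> = ennreal (\<Sum>A\<in>F. e + e)"
    by (intro sum_ennreal) (simp add: e_def)
  also have "(\<Sum>A\<in>F. e + e) = 2 * real (card F) * e"
    by simp
  finally show ?thesis by (simp add: e_def)
qed

lemma (in prob_space) nn_integral_deviation_soft_max_le:
  assumes F: "finite F" "F \<noteq> {}" "F \<subseteq> events" and P: "\<And>A. A \<in> F \<Longrightarrow> prob A \<le> P"
    and s: "0 < s" "s \<le> 1" and n: "n > 0"
  shows "(\<integral>\<^sup>+X. deviation_soft_max M n F s P X \<partial>PiM {..<n} (\<lambda>_. M))
           \<le> (ln (2 * real (card F)) + real n * P * s\<^sup>2 + 1) / (s * real n)"
proof -
  interpret PM: prob_space "PiM {..<n} (\<lambda>_. M)" by (intro prob_space_PiM prob_space_axioms)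
  define c where "c = 2 * real (card F) * exp (real n * P * s\<^sup>2)"
  define k where "k = 1 / (s * real n)"
  define Z where "Z X = (\<Sum>A\<in>F. exp (s * real n * deviation M n X A) + exp (- (s * real n * deviation M n X A)))"
    for X
  have "card F > 0" using F card_gt_0_iff by blast
  have "0 \<le> P" using F P by (meson all_not_in_conv measure_nonneg order_trans)
  then have "1 * 1 \<le> 2 * real (card F) * exp (real n * P * s\<^sup>2)"
    using \<open>card F > 0\<close> by (intro mult_mono) auto
  then have "1 \<le> c" by (simp add: c_def)
  then have "0 < c" "0 \<le> ln c" by simp_all
  have "0 < k" using s n by (simp add: k_def)
  have "0 \<le> Z X" for X by (auto simp: Z_def intro!: sum_nonneg add_nonneg_nonneg)
  have "ennreal (deviation_soft_max M n F s P X) = ennreal (k / c) * Z X + ennreal (k * ln c)" for X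
  proof -
    have "deviation_soft_max M n F s P X = k / c * Z X + k * ln c"
      by (simp add: deviation_soft_max_def Let_def k_def c_def Z_def add_divide_distrib mult_ac)
    also have "ennreal \<dots> = ennreal (k / c * Z X) + ennreal (k * ln c)"
      using \<open>0 \<le> Z X\<close> \<open>0 < k\<close> \<open>0 < c\<close> \<open>0 \<le> ln c\<close> by (intro ennreal_plus) auto
    also have "ennreal (k / c * Z X) = ennreal (k / c) * Z X"
      using \<open>0 \<le> Z X\<close> \<open>0 < k\<close> \<open>0 < c\<close> by (intro ennreal_mult) auto
    finally show ?thesis .
  qed
  then have "(\<integral>\<^sup>+X. deviation_soft_max M n F s P X \<partial>PiM {..<n} (\<lambda>_. M))
      = ennreal (k / c) * (\<integral>\<^sup>+X. Z X \<partial>PiM {..<n} (\<lambda>_. M)) + ennreal (k * ln c)"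
    using F by (simp add: nn_integral_add nn_integral_cmult PM.emeasure_space_1 Z_def subset_eq)
  also have "\<dots> \<le> ennreal (k / c) * ennreal c + ennreal (k * ln c)"
    unfolding Z_def c_def using F P s by (intro add_mono mult_left_mono nn_integral_sum_exp_deviation_le) auto
  also have "\<dots> = ennreal (k * (1 + ln c))"
    using \<open>0 < k\<close> \<open>0 < c\<close> \<open>0 \<le> ln c\<close>
    by (simp add: ennreal_mult[symmetric] ennreal_plus[symmetric] distrib_left del: ennreal_plus)
  also have "k * (1 + ln c) = (ln (2 * real (card F)) + real n * P * s\<^sup>2 + 1) / (s * real n)"
    using \<open>card F > 0\<close> by (simp add: k_def c_def ln_mult)
  finally show ?thesis .
qed

section \<open>The distributional transform\<close>

definition cdf_less :: "real measure \<Rightarrow> real \<Rightarrow> real" where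
  "cdf_less M x = measure M {..<x}"

definition unit_uniform :: "real measure" where
  "unit_uniform = uniform_measure lborel {0..1}"

lemma prob_space_unit_uniform: "prob_space unit_uniform"
  unfolding unit_uniform_def by (intro prob_space_uniform_measure) auto

lemma sets_unit_uniform [measurable_cong]: "sets unit_uniform = sets borel"
  by (simp add: unit_uniform_def)

lemma space_unit_uniform [simp]: "space unit_uniform = UNIV"
  by (simp add: unit_uniform_def)

lemma emeasure_unit_uniform:
  "B \<in> sets borel \<Longrightarrow> emeasure unit_uniform B = emeasure lborel (B \<inter> {0..1})"
  by (simp add: unit_uniform_def Int_commute divide_ennreal_def)

lemma emeasure_unit_uniform_affine_le:
  fixes a b c :: real
  assumes "a < b"
  shows "emeasure unit_uniform {v. a + max 0 (min 1 v) * (b - a) \<le> c} \<le> ennreal ((c - a) / (b - a))"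
proof -
  define r where "r = (c - a) / (b - a)"
  have "{v. a + max 0 (min 1 v) * (b - a) \<le> c} \<inter> {0..1} \<subseteq> {0..r}"
    using assms by (auto simp: r_def pos_le_divide_eq algebra_simps)
  then have "emeasure lborel ({v. a + max 0 (min 1 v) * (b - a) \<le> c} \<inter> {0..1}) \<le> emeasure lborel {0..r}"
    by (intro emeasure_mono) auto
  then show ?thesis
    by (cases "0 \<le> r") (simp_all add: emeasure_unit_uniform emeasure_lborel_Icc_eq r_def ennreal_neg)
qed

lemma emeasure_unit_uniform_affine_less_ge:
  fixes a b c :: real
  assumes "a < b" "c \<le> b"
  shows "ennreal ((c - a) / (b - a)) \<le> emeasure unit_uniform {v. a + max 0 (min 1 v) * (b - a) < c}"
proof -
  define r where "r = (c - a) / (b - a)"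
  have "r \<le> 1" using assms by (simp add: r_def)
  have "{0..<r} \<subseteq> {v. a + max 0 (min 1 v) * (b - a) < c} \<inter> {0..1}"
  proof
    fix v assume v: "v \<in> {0..<r}"
    then have "0 \<le> v" "v \<le> 1" using \<open>r \<le> 1\<close> by auto
    have "v * (b - a) < r * (b - a)" using v assms by (intro mult_strict_right_mono) auto
    also have "r * (b - a) = c - a" using assms by (simp add: r_def)
    finally show "v \<in> {v. a + max 0 (min 1 v) * (b - a) < c} \<inter> {0..1}"
      using \<open>0 \<le> v\<close> \<open>v \<le> 1\<close> by simp
  qed
  then have "emeasure lborel {0..<r} \<le> emeasure lborel ({v. a + max 0 (min 1 v) * (b - a) < c} \<inter> {0..1})"
    by (intro emeasure_mono) auto
  then show ?thesis
    by (cases "0 \<le> r") (simp_all add: emeasure_unit_uniform r_def ennreal_neg)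
qed

lemma emeasure_pair_unit_uniform_Collect:
  assumes "Measurable.pred (N \<Otimes>\<^sub>M unit_uniform) (\<lambda>p. Q (fst p) (snd p))"
  shows "emeasure (N \<Otimes>\<^sub>M unit_uniform) {p \<in> space (N \<Otimes>\<^sub>M unit_uniform). Q (fst p) (snd p)}
           = (\<integral>\<^sup>+x. emeasure unit_uniform {v. Q x v} \<partial>N)"
proof -
  interpret U: prob_space unit_uniform by (rule prob_space_unit_uniform)
  have "emeasure (N \<Otimes>\<^sub>M unit_uniform) {p \<in> space (N \<Otimes>\<^sub>M unit_uniform). Q (fst p) (snd p)}
      = (\<integral>\<^sup>+x. emeasure unit_uniform (Pair x -` {p \<in> space (N \<Otimes>\<^sub>M unit_uniform). Q (fst p) (snd p)}) \<partial>N)"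
    by (rule U.emeasure_pair_measure_alt) (use assms in \<open>simp add: pred_def\<close>)
  also have "\<dots> = (\<integral>\<^sup>+x. emeasure unit_uniform {v. Q x v} \<partial>N)"
    by (intro nn_integral_cong arg_cong[where f = "emeasure unit_uniform"]) (auto simp: space_pair_measure)
  finally show ?thesis .
qed

lemma measure_pair_unit_uniform_Times:
  assumes "A \<in> sets N"
  shows "measure (N \<Otimes>\<^sub>M unit_uniform) (A \<times> UNIV) = measure N A"
proof -
  interpret U: prob_space unit_uniform by (rule prob_space_unit_uniform)
  show ?thesis
    using U.emeasure_pair_measure_Times[OF assms, of UNIV] U.emeasure_space_1 by (simp add: measure_def)
qed

text \<open>
  The clamping of v is irrelevant under unit_uniform; it keeps the transform between
  cdf_less M x and cdf M x for every real v.
\<close>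
definition distributional_transform :: "real measure \<Rightarrow> real \<Rightarrow> real \<Rightarrow> real" where
  "distributional_transform M x v = cdf_less M x + max 0 (min 1 v) * (cdf M x - cdf_less M x)"

definition transformed_inf :: "real measure \<Rightarrow> real set \<Rightarrow> real" where
  "transformed_inf M S = (if Inf S \<in> S then cdf_less M (Inf S) else cdf M (Inf S))"

definition transformed_sup :: "real measure \<Rightarrow> real set \<Rightarrow> real" where
  "transformed_sup M S = (if Sup S \<in> S then cdf M (Sup S) else cdf_less M (Sup S))"

context real_distribution
begin

lemma cdf_less_mono: "x \<le> y \<Longrightarrow> cdf_less M x \<le> cdf_less M y"
  unfolding cdf_less_def by (intro finite_measure_mono) auto

lemma cdf_less_le_cdf: "cdf_less M x \<le> cdf M x"
  unfolding cdf_less_def cdf_def by (intro finite_measure_mono) auto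

lemma cdf_le_cdf_less: "x < y \<Longrightarrow> cdf M x \<le> cdf_less M y"
  unfolding cdf_less_def cdf_def by (intro finite_measure_mono) auto

lemma cdf_less_nonneg: "0 \<le> cdf_less M x"
  by (simp add: cdf_less_def)

lemma measure_singleton_eq_cdf_diff: "measure M {x} = cdf M x - cdf_less M x"
proof -
  have "{x} = {..x} - {..<x}" by auto
  moreover have "measure M ({..x} - {..<x}) = measure M {..x} - measure M {..<x}"
    by (rule finite_measure_Diff) auto
  ultimately show ?thesis by (simp add: cdf_def cdf_less_def)
qed

lemma borel_measurable_cdf_less [measurable]: "cdf_less M \<in> borel_measurable borel"
  by (rule borel_measurable_mono) (auto simp: mono_def cdf_less_mono)

lemma borel_measurable_cdf [measurable]: "cdf M \<in> borel_measurable borel"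
  by (rule borel_measurable_mono) (auto simp: mono_def cdf_nondecreasing)

lemma cdf_less_le_of_cdf_le:
  assumes "\<And>z. z < y \<Longrightarrow> cdf M z \<le> c"
  shows "cdf_less M y \<le> c"
  unfolding cdf_less_def
  by (rule tendsto_upperbound[OF cdf_at_left]) (auto simp: eventually_at_filter assms intro!: always_eventually)

lemma cdf_ge_of_cdf_less_ge:
  assumes "\<And>z. y < z \<Longrightarrow> c \<le> cdf_less M z"
  shows "c \<le> cdf M y"
proof (rule tendsto_lowerbound)
  show "(cdf M \<longlongrightarrow> cdf M y) (at_right y)"
    using cdf_is_right_cont continuous_within by blast
  show "\<forall>\<^sub>F z in at_right y. c \<le> cdf M z"
    by (auto simp: eventually_at_filter intro!: always_eventually order_trans[OF assms cdf_less_le_cdf])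
qed simp

lemma measure_cdf_le_le:
  assumes "0 \<le> c"
  shows "measure M {x. cdf M x \<le> c} \<le> c"
proof -
  define A where "A = {x. cdf M x \<le> c}"
  have down: "z \<in> A" if "x \<in> A" "z \<le> x" for x z
    using that cdf_nondecreasing[of z x] by (auto simp: A_def)
  consider (empty) "A = {}" | (unbounded) "\<not> bdd_above A"
    | (max) "bdd_above A" "Sup A \<in> A" | (sup) "A \<noteq> {}" "bdd_above A" "Sup A \<notin> A"
    by blast
  then have "measure M A \<le> c"
  proof cases
    case empty
    then show ?thesis using assms by simp
  next
    case unbounded
    have "cdf M x \<le> c" for x
    proof -
      from unbounded obtain a where "a \<in> A" "\<not> a \<le> x" unfolding bdd_above_def by blast
      then show ?thesis using down[of a x] by (simp add: A_def)
    qed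
    then have "1 \<le> c"
      by (intro tendsto_upperbound[OF cdf_lim_at_top_prob]) (auto intro: always_eventually)
    then show ?thesis using prob_le_1[of A] by linarith
  next
    case max
    then have "measure M A \<le> cdf M (Sup A)"
      unfolding cdf_def by (intro finite_measure_mono) (auto intro: cSup_upper)
    then show ?thesis using max(2) by (simp add: A_def)
  next
    case sup
    then have "measure M A \<le> cdf_less M (Sup A)"
      unfolding cdf_less_def by (intro finite_measure_mono) (auto simp: order.strict_iff_order intro: cSup_upper)
    also have "\<dots> \<le> c"
    proof (rule cdf_less_le_of_cdf_le)
      fix z assume "z < Sup A"
      then obtain x where "x \<in> A" "z < x" using sup less_cSup_iff by blast
      then show "cdf M z \<le> c" using down[of x z] by (simp add: A_def)
    qed
    finally show ?thesis .
  qed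
  then show ?thesis by (simp add: A_def)
qed

lemma measure_cdf_less_less_ge:
  assumes "c \<le> 1"
  shows "c \<le> measure M {x. cdf_less M x < c}"
proof -
  define B where "B = {x. c \<le> cdf_less M x}"
  have up: "z \<in> B" if "x \<in> B" "x \<le> z" for x z
    using that cdf_less_mono[of x z] by (auto simp: B_def)
  have "{x. cdf_less M x < c} \<in> sets M" using M_is_borel by measurable
  then have mono: "measure M C \<le> measure M {x. cdf_less M x < c}" if "C \<subseteq> - B" for C
    using that by (intro finite_measure_mono) (auto simp: B_def)
  consider (empty) "B = {}" | (unbounded) "\<not> bdd_below B"
    | (min) "bdd_below B" "Inf B \<in> B" | (inf) "B \<noteq> {}" "bdd_below B" "Inf B \<notin> B"
    by blast
  then show ?thesis
  proof cases
    case empty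
    moreover have "prob UNIV = 1" using prob_space by simp
    ultimately show ?thesis using assms mono[of UNIV] by simp
  next
    case unbounded
    have "c \<le> cdf M x" for x
    proof -
      from unbounded obtain b where "b \<in> B" "\<not> x \<le> b" unfolding bdd_below_def by blast
      then have "c \<le> cdf_less M x" using up[of b x] by (simp add: B_def)
      then show ?thesis using cdf_less_le_cdf[of x] by linarith
    qed
    then have "c \<le> 0"
      by (intro tendsto_lowerbound[OF cdf_lim_at_bot]) (auto intro: always_eventually)
    then show ?thesis by (meson measure_nonneg order_trans)
  next
    case min
    then have "{..<Inf B} \<subseteq> - B" by (auto dest: cInf_lower)
    then show ?thesis using min(2) mono[of "{..<Inf B}"] by (simp add: B_def cdf_less_def)
  next
    case inf
    have "{..Inf B} \<subseteq> - B"
    proof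
      fix x assume "x \<in> {..Inf B}"
      moreover have "Inf B \<le> x" if "x \<in> B" using inf(2) that by (simp add: cInf_lower)
      ultimately show "x \<in> - B" using inf(3) by (auto simp: antisym)
    qed
    moreover have "c \<le> cdf M (Inf B)"
    proof (rule cdf_ge_of_cdf_less_ge)
      fix z assume "Inf B < z"
      then obtain x where "x \<in> B" "x < z" using inf cInf_less_iff by blast
      then show "c \<le> cdf_less M z" using up[of x z] by (simp add: B_def)
    qed
    ultimately show ?thesis using mono[of "{..Inf B}"] by (simp add: cdf_def)
  qed
qed

lemma distributional_transform_ge: "cdf_less M x \<le> distributional_transform M x v"
  unfolding distributional_transform_def using cdf_less_le_cdf[of x] by simp

lemma distributional_transform_le: "distributional_transform M x v \<le> cdf M x"
proof -
  have "max 0 (min 1 v) * (cdf M x - cdf_less M x) \<le> 1 * (cdf M x - cdf_less M x)"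
    using cdf_less_le_cdf[of x] by (intro mult_right_mono) auto
  then show ?thesis unfolding distributional_transform_def by simp
qed

lemma measurable_distributional_transform [measurable]:
  "(\<lambda>p. distributional_transform M (fst p) (snd p)) \<in> borel_measurable (M \<Otimes>\<^sub>M unit_uniform)"
proof -
  have [measurable_cong]: "sets M = sets borel" by (rule M_is_borel)
  show ?thesis unfolding distributional_transform_def by measurable
qed

lemma nn_integral_split_atom:
  assumes "cdf_less M x\<^sub>0 < c" "c \<le> cdf M x\<^sub>0"
  defines "r \<equiv> (c - cdf_less M x\<^sub>0) / (cdf M x\<^sub>0 - cdf_less M x\<^sub>0)"
  shows "(\<integral>\<^sup>+x. indicator {..<x\<^sub>0} x + ennreal r * indicator {x\<^sub>0} x \<partial>M) = ennreal c"
proof -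
  have "0 \<le> r" using assms by (simp add: r_def)
  have "(\<integral>\<^sup>+x. indicator {..<x\<^sub>0} x + ennreal r * indicator {x\<^sub>0} x \<partial>M)
      = emeasure M {..<x\<^sub>0} + ennreal r * emeasure M {x\<^sub>0}"
    by (subst nn_integral_add) (auto simp: nn_integral_cmult_indicator)
  also have "\<dots> = ennreal (cdf_less M x\<^sub>0 + r * (cdf M x\<^sub>0 - cdf_less M x\<^sub>0))"
    using \<open>0 \<le> r\<close> cdf_less_nonneg[of x\<^sub>0] cdf_less_le_cdf[of x\<^sub>0]
    by (simp add: emeasure_eq_measure measure_singleton_eq_cdf_diff cdf_less_def[symmetric]
        ennreal_mult ennreal_plus)
  also have "cdf_less M x\<^sub>0 + r * (cdf M x\<^sub>0 - cdf_less M x\<^sub>0) = c"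
    using assms by (simp add: r_def)
  finally show ?thesis .
qed

lemma emeasure_distributional_transform_le_if_no_atom:
  assumes "\<not> (cdf_less M x < c \<and> c < cdf M x)"
  shows "emeasure unit_uniform {v. distributional_transform M x v \<le> c} \<le> indicator {x. cdf M x \<le> c} x"
proof (cases "cdf M x \<le> c")
  case True
  then show ?thesis using prob_space.emeasure_le_1[OF prob_space_unit_uniform] by simp
next
  case False
  then have "c \<le> cdf_less M x" using assms by auto
  show ?thesis
  proof (cases "cdf_less M x < cdf M x")
    case True
    then have "emeasure unit_uniform {v. distributional_transform M x v \<le> c}
        \<le> ennreal ((c - cdf_less M x) / (cdf M x - cdf_less M x))"
      unfolding distributional_transform_def by (rule emeasure_unit_uniform_affine_le)
    also have "\<dots> = 0"
      using True \<open>c \<le> cdf_less M x\<close> by (intro ennreal_neg divide_nonpos_pos) auto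
    finally show ?thesis by simp
  next
    case False
    then have "{v. distributional_transform M x v \<le> c} = {}"
      using \<open>\<not> cdf M x \<le> c\<close> cdf_less_le_cdf[of x] by (auto simp: distributional_transform_def)
    then show ?thesis by simp
  qed
qed

lemma emeasure_distributional_transform_le_if_atom:
  assumes "cdf_less M x\<^sub>0 < c" "c < cdf M x\<^sub>0"
  defines "r \<equiv> (c - cdf_less M x\<^sub>0) / (cdf M x\<^sub>0 - cdf_less M x\<^sub>0)"
  shows "emeasure unit_uniform {v. distributional_transform M x v \<le> c}
           \<le> indicator {..<x\<^sub>0} x + ennreal r * indicator {x\<^sub>0} x"
proof -
  consider "x < x\<^sub>0" | "x = x\<^sub>0" | "x\<^sub>0 < x" by linarith
  then show ?thesis
  proof cases
    case 1
    then show ?thesis using prob_space.emeasure_le_1[OF prob_space_unit_uniform] by simp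
  next
    case 2
    then show ?thesis
      using emeasure_unit_uniform_affine_le[of "cdf_less M x\<^sub>0" "cdf M x\<^sub>0" c] assms
      by (simp add: distributional_transform_def)
  next
    case 3
    then have "c < distributional_transform M x v" for v
      using cdf_le_cdf_less[OF 3] distributional_transform_ge[of x v] assms(2) by linarith
    then have "{v. distributional_transform M x v \<le> c} = {}" by (auto simp: not_le[symmetric])
    then show ?thesis by simp
  qed
qed

lemma measure_distributional_transform_le:
  assumes "0 \<le> c"
  shows "measure (M \<Otimes>\<^sub>M unit_uniform)
           {p \<in> space (M \<Otimes>\<^sub>M unit_uniform). distributional_transform M (fst p) (snd p) \<le> c} \<le> c"
proof -
  interpret MU: prob_space "M \<Otimes>\<^sub>M unit_uniform"
    by (intro prob_space_pair prob_space_axioms prob_space_unit_uniform)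
  have "emeasure (M \<Otimes>\<^sub>M unit_uniform)
          {p \<in> space (M \<Otimes>\<^sub>M unit_uniform). distributional_transform M (fst p) (snd p) \<le> c}
      = (\<integral>\<^sup>+x. emeasure unit_uniform {v. distributional_transform M x v \<le> c} \<partial>M)"
    by (rule emeasure_pair_unit_uniform_Collect) measurable
  also have "\<dots> \<le> c"
  proof (cases "\<exists>x\<^sub>0. cdf_less M x\<^sub>0 < c \<and> c < cdf M x\<^sub>0")
    case False
    then have "(\<integral>\<^sup>+x. emeasure unit_uniform {v. distributional_transform M x v \<le> c} \<partial>M)
        \<le> (\<integral>\<^sup>+x. indicator {x. cdf M x \<le> c} x \<partial>M)"
      by (intro nn_integral_mono emeasure_distributional_transform_le_if_no_atom) blast
    also have "\<dots> = emeasure M {x. cdf M x \<le> c}"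
      using M_is_borel by (intro nn_integral_indicator) measurable
    also have "\<dots> \<le> c"
      using measure_cdf_le_le[OF assms] by (simp add: emeasure_eq_measure ennreal_leI)
    finally show ?thesis .
  next
    case True
    then obtain x\<^sub>0 where "cdf_less M x\<^sub>0 < c" "c < cdf M x\<^sub>0" by blast
    then show ?thesis
      by (subst nn_integral_split_atom[symmetric, of x\<^sub>0])
        (auto intro!: nn_integral_mono emeasure_distributional_transform_le_if_atom)
  qed
  finally show ?thesis using assms by (simp add: MU.emeasure_eq_measure)
qed

lemma emeasure_distributional_transform_less_if_no_atom:
  assumes "\<not> (cdf_less M x < c \<and> c \<le> cdf M x)"
  shows "indicator {x. cdf_less M x < c} x \<le> emeasure unit_uniform {v. distributional_transform M x v < c}"
proof (cases "cdf_less M x < c")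
  case True
  then have "distributional_transform M x v < c" for v
    using assms distributional_transform_le[of x v] by force
  then have "{v. distributional_transform M x v < c} = UNIV" by auto
  then show ?thesis using prob_space.emeasure_space_1[OF prob_space_unit_uniform] by (simp add: indicator_def)
qed simp

lemma emeasure_distributional_transform_less_if_atom:
  assumes "cdf_less M x\<^sub>0 < c" "c \<le> cdf M x\<^sub>0"
  defines "r \<equiv> (c - cdf_less M x\<^sub>0) / (cdf M x\<^sub>0 - cdf_less M x\<^sub>0)"
  shows "indicator {..<x\<^sub>0} x + ennreal r * indicator {x\<^sub>0} x
           \<le> emeasure unit_uniform {v. distributional_transform M x v < c}"
proof -
  consider "x < x\<^sub>0" | "x = x\<^sub>0" | "x\<^sub>0 < x" by linarith
  then show ?thesis
  proof cases
    case 1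
    then have "distributional_transform M x v < c" for v
      using cdf_le_cdf_less[OF 1] distributional_transform_le[of x v] assms(1) by linarith
    then have "{v. distributional_transform M x v < c} = UNIV" by auto
    then show ?thesis using 1 prob_space.emeasure_space_1[OF prob_space_unit_uniform] by simp
  next
    case 2
    then show ?thesis
      using emeasure_unit_uniform_affine_less_ge[of "cdf_less M x\<^sub>0" "cdf M x\<^sub>0" c] assms
      by (simp add: distributional_transform_def)
  qed simp
qed

lemma measure_distributional_transform_less_ge:
  assumes "c \<le> 1"
  shows "c \<le> measure (M \<Otimes>\<^sub>M unit_uniform)
                {p \<in> space (M \<Otimes>\<^sub>M unit_uniform). distributional_transform M (fst p) (snd p) < c}"
proof -
  interpret MU: prob_space "M \<Otimes>\<^sub>M unit_uniform"
    by (intro prob_space_pair prob_space_axioms prob_space_unit_uniform)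
  have "emeasure (M \<Otimes>\<^sub>M unit_uniform)
          {p \<in> space (M \<Otimes>\<^sub>M unit_uniform). distributional_transform M (fst p) (snd p) < c}
      = (\<integral>\<^sup>+x. emeasure unit_uniform {v. distributional_transform M x v < c} \<partial>M)"
    by (rule emeasure_pair_unit_uniform_Collect) measurable
  also have "ennreal c \<le> \<dots>"
  proof (cases "\<exists>x\<^sub>0. cdf_less M x\<^sub>0 < c \<and> c \<le> cdf M x\<^sub>0")
    case False
    have "ennreal c \<le> emeasure M {x. cdf_less M x < c}"
      using measure_cdf_less_less_ge[OF assms] by (simp add: emeasure_eq_measure ennreal_leI)
    also have "\<dots> = (\<integral>\<^sup>+x. indicator {x. cdf_less M x < c} x \<partial>M)"
      using M_is_borel by (intro nn_integral_indicator[symmetric]) measurable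
    also have "\<dots> \<le> (\<integral>\<^sup>+x. emeasure unit_uniform {v. distributional_transform M x v < c} \<partial>M)"
      using False by (intro nn_integral_mono emeasure_distributional_transform_less_if_no_atom) blast
    finally show ?thesis .
  next
    case True
    then obtain x\<^sub>0 where "cdf_less M x\<^sub>0 < c" "c \<le> cdf M x\<^sub>0" by blast
    then show ?thesis
      by (subst nn_integral_split_atom[symmetric, of x\<^sub>0])
        (auto intro!: nn_integral_mono emeasure_distributional_transform_less_if_atom)
  qed
  finally show ?thesis using assms by (simp add: MU.emeasure_eq_measure)
qed

lemma distributional_transform_nonneg: "0 \<le> distributional_transform M x v"
  using distributional_transform_ge[of x v] cdf_less_nonneg[of x] by linarith

lemma distributional_transform_le_1: "distributional_transform M x v \<le> 1"
  using distributional_transform_le[of x v] cdf_bounded_prob[of x] by linarith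

lemma measure_distributional_transform_between_le:
  assumes "a \<le> b"
  shows "measure (M \<Otimes>\<^sub>M unit_uniform) {p \<in> space (M \<Otimes>\<^sub>M unit_uniform).
           a \<le> distributional_transform M (fst p) (snd p) \<and> distributional_transform M (fst p) (snd p) \<le> b}
         \<le> b - a"
proof -
  interpret MU: prob_space "M \<Otimes>\<^sub>M unit_uniform"
    by (intro prob_space_pair prob_space_axioms prob_space_unit_uniform)
  define W where "W p = distributional_transform M (fst p) (snd p)" for p
  define E where "E = {p \<in> space (M \<Otimes>\<^sub>M unit_uniform). a \<le> W p \<and> W p \<le> b}"
  define E\<^sub>b where "E\<^sub>b = {p \<in> space (M \<Otimes>\<^sub>M unit_uniform). W p \<le> b}"
  define E\<^sub>a where "E\<^sub>a = {p \<in> space (M \<Otimes>\<^sub>M unit_uniform). W p < a}"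
  have W_01: "0 \<le> W p" "W p \<le> 1" for p
    by (simp_all add: W_def distributional_transform_nonneg distributional_transform_le_1)
  have "measure (M \<Otimes>\<^sub>M unit_uniform) E \<le> b - a"
  proof (cases "b < 0 \<or> 1 < a")
    case True
    then have "\<not> (a \<le> W p \<and> W p \<le> b)" for p using W_01[of p] by linarith
    then have "E = {}" by (simp add: E_def)
    then show ?thesis using assms by simp
  next
    case False
    have [measurable]: "W \<in> borel_measurable (M \<Otimes>\<^sub>M unit_uniform)" unfolding W_def by measurable
    have "E\<^sub>a \<in> sets (M \<Otimes>\<^sub>M unit_uniform)" "E\<^sub>b \<in> sets (M \<Otimes>\<^sub>M unit_uniform)"
      unfolding E\<^sub>a_def E\<^sub>b_def by measurable
    moreover have "E = E\<^sub>b - E\<^sub>a" "E\<^sub>a \<subseteq> E\<^sub>b" using assms by (auto simp: E_def E\<^sub>a_def E\<^sub>b_def)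
    ultimately have "measure (M \<Otimes>\<^sub>M unit_uniform) E
        = measure (M \<Otimes>\<^sub>M unit_uniform) E\<^sub>b - measure (M \<Otimes>\<^sub>M unit_uniform) E\<^sub>a"
      by (simp add: MU.finite_measure_Diff)
    also have "\<dots> \<le> b - a"
      using measure_distributional_transform_le[of b] measure_distributional_transform_less_ge[of a] False
      by (simp add: E\<^sub>a_def E\<^sub>b_def W_def)
    finally show ?thesis .
  qed
  then show ?thesis by (simp add: E_def W_def)
qed

lemma transformed_inf_sup_bounds:
  "0 \<le> transformed_inf M S" "transformed_inf M S \<le> 1"
  "0 \<le> transformed_sup M S" "transformed_sup M S \<le> 1"
  by (auto simp: transformed_inf_def transformed_sup_def cdf_less_def cdf_def)

lemma transformed_inf_le_distributional_transform:
  assumes "bdd_below S" "x \<in> S"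
  shows "transformed_inf M S \<le> distributional_transform M x v"
proof -
  have "Inf S \<le> x" using assms by (rule cInf_lower[rotated])
  then consider "Inf S \<in> S" | "Inf S \<notin> S" "Inf S < x" using assms(2) by force
  then show ?thesis
  proof cases
    case 1
    then show ?thesis using cdf_less_mono[OF \<open>Inf S \<le> x\<close>] distributional_transform_ge[of x v]
      by (simp add: transformed_inf_def)
  next
    case 2
    then show ?thesis using cdf_le_cdf_less[of "Inf S" x] distributional_transform_ge[of x v]
      by (simp add: transformed_inf_def)
  qed
qed

lemma distributional_transform_le_transformed_sup:
  assumes "bdd_above S" "x \<in> S"
  shows "distributional_transform M x v \<le> transformed_sup M S"
proof -
  have "x \<le> Sup S" using assms by (rule cSup_upper[rotated])
  then consider "Sup S \<in> S" | "Sup S \<notin> S" "x < Sup S" using assms(2) by force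
  then show ?thesis
  proof cases
    case 1
    then show ?thesis using cdf_nondecreasing[OF \<open>x \<le> Sup S\<close>] distributional_transform_le[of x v]
      by (simp add: transformed_sup_def)
  next
    case 2
    then show ?thesis using cdf_le_cdf_less[of x "Sup S"] distributional_transform_le[of x v]
      by (simp add: transformed_sup_def)
  qed
qed

lemma Inf_le_if_transformed_inf_less:
  assumes "transformed_inf M S < distributional_transform M x v"
  shows "Inf S < x \<or> (x = Inf S \<and> Inf S \<in> S)"
proof (cases "Inf S \<in> S")
  case True
  have "\<not> x < Inf S"
    using assms True cdf_le_cdf_less[of x "Inf S"] distributional_transform_le[of x v]
    by (auto simp: transformed_inf_def)
  then show ?thesis using True by auto
next
  case False
  have "\<not> x \<le> Inf S"
    using assms False cdf_nondecreasing[of x "Inf S"] distributional_transform_le[of x v]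
    by (auto simp: transformed_inf_def)
  then show ?thesis by simp
qed

lemma le_Sup_if_less_transformed_sup:
  assumes "distributional_transform M x v < transformed_sup M S"
  shows "x < Sup S \<or> (x = Sup S \<and> Sup S \<in> S)"
proof (cases "Sup S \<in> S")
  case True
  have "\<not> Sup S < x"
    using assms True cdf_le_cdf_less[of "Sup S" x] distributional_transform_ge[of x v]
    by (auto simp: transformed_sup_def)
  then show ?thesis using True by auto
next
  case False
  have "\<not> Sup S \<le> x"
    using assms False cdf_less_mono[of "Sup S" x] distributional_transform_ge[of x v]
    by (auto simp: transformed_sup_def)
  then show ?thesis by simp
qed

lemma mem_interval_if_between_transformed:
  assumes S: "is_interval S" "S \<noteq> {}" "bdd_below S" "bdd_above S"
    and W: "transformed_inf M S < distributional_transform M x v"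
      "distributional_transform M x v < transformed_sup M S"
  shows "x \<in> S"
proof (cases "Inf S < x \<and> x < Sup S")
  case True
  then obtain a b where "a \<in> S" "a < x" "b \<in> S" "x < b"
    using S cInf_less_iff less_cSup_iff by meson
  then show ?thesis using S(1) by (meson is_interval_1 less_imp_le)
next
  case False
  then show ?thesis
    using Inf_le_if_transformed_inf_less[OF W(1)] le_Sup_if_less_transformed_sup[OF W(2)] by auto
qed

end

lemma (in prob_space) measure_distributional_transform_distr_between_le:
  assumes [measurable]: "X \<in> borel_measurable M" and "a \<le> b"
  shows "measure (M \<Otimes>\<^sub>M unit_uniform) {p \<in> space (M \<Otimes>\<^sub>M unit_uniform).
           a \<le> distributional_transform (distr M borel X) (X (fst p)) (snd p)
           \<and> distributional_transform (distr M borel X) (X (fst p)) (snd p) \<le> b} \<le> b - a"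
proof -
  define N where "N = distr M borel X"
  interpret N: real_distribution N unfolding N_def by simp
  interpret U: prob_space unit_uniform by (rule prob_space_unit_uniform)
  define E where "E = {q \<in> space (N \<Otimes>\<^sub>M unit_uniform).
                     a \<le> distributional_transform N (fst q) (snd q) \<and> distributional_transform N (fst q) (snd q) \<le> b}"
  have [measurable_cong]: "sets N = sets borel" by (simp add: N_def)
  have "E \<in> sets (N \<Otimes>\<^sub>M unit_uniform)" unfolding E_def by measurable
  then have E: "E \<in> sets (borel \<Otimes>\<^sub>M unit_uniform)"
    using sets_pair_measure_cong[OF \<open>sets N = sets borel\<close> refl] by simp
  have "N \<Otimes>\<^sub>M unit_uniform = distr (M \<Otimes>\<^sub>M unit_uniform) (borel \<Otimes>\<^sub>M unit_uniform) (\<lambda>(\<omega>, v). (X \<omega>, v))"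
    using pair_measure_distr[of X M borel "\<lambda>v. v" unit_uniform unit_uniform]
    by (simp add: N_def U.sigma_finite_measure_axioms)
  then have "measure (N \<Otimes>\<^sub>M unit_uniform) E
      = measure (M \<Otimes>\<^sub>M unit_uniform) ((\<lambda>(\<omega>, v). (X \<omega>, v)) -` E \<inter> space (M \<Otimes>\<^sub>M unit_uniform))"
    using E by (simp add: measure_distr)
  also have "(\<lambda>(\<omega>, v). (X \<omega>, v)) -` E \<inter> space (M \<Otimes>\<^sub>M unit_uniform) = {p \<in> space (M \<Otimes>\<^sub>M unit_uniform).
           a \<le> distributional_transform N (X (fst p)) (snd p) \<and> distributional_transform N (X (fst p)) (snd p) \<le> b}"
    by (auto simp: E_def space_pair_measure)
  finally show ?thesis
    using N.measure_distributional_transform_between_le[OF assms(2)] by (simp add: E_def N_def)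
qed

section \<open>Dyadic chaining\<close>

definition dyadic_floor :: "real \<Rightarrow> nat \<Rightarrow> int" where
  "dyadic_floor x m = \<lfloor>x * 2 ^ m\<rfloor>"

lemma floor_double_bounds:
  fixes y :: real
  shows "2 * \<lfloor>y\<rfloor> \<le> \<lfloor>2 * y\<rfloor>" "\<lfloor>2 * y\<rfloor> \<le> 2 * \<lfloor>y\<rfloor> + 1"
proof -
  have "2 * real_of_int \<lfloor>y\<rfloor> < real_of_int \<lfloor>2 * y\<rfloor> + 1"
    using of_int_floor_le[of y] floor_correct[of "2 * y"] by linarith
  then show "2 * \<lfloor>y\<rfloor> \<le> \<lfloor>2 * y\<rfloor>" by linarith
  have "real_of_int \<lfloor>2 * y\<rfloor> < 2 * real_of_int \<lfloor>y\<rfloor> + 2"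
    using floor_correct[of y] of_int_floor_le[of "2 * y"] by linarith
  then show "\<lfloor>2 * y\<rfloor> \<le> 2 * \<lfloor>y\<rfloor> + 1" by linarith
qed

lemma dyadic_floor_Suc:
  "2 * dyadic_floor x m \<le> dyadic_floor x (Suc m)" "dyadic_floor x (Suc m) \<le> 2 * dyadic_floor x m + 1"
  using floor_double_bounds[of "x * 2 ^ m"] by (simp_all add: dyadic_floor_def mult_ac)

lemma dyadic_floor_le: "real_of_int (dyadic_floor x m) / 2 ^ m \<le> x"
  by (simp add: dyadic_floor_def pos_divide_le_eq)

lemma less_dyadic_floor_plus_1: "x < real_of_int (dyadic_floor x m + 1) / 2 ^ m"
  using floor_correct[of "x * 2 ^ m"] by (simp add: dyadic_floor_def pos_less_divide_eq)

lemma dyadic_floor_bounds: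
  assumes "0 \<le> x" "x \<le> 1"
  shows "0 \<le> dyadic_floor x m" "dyadic_floor x m \<le> 2 ^ m"
proof -
  have "x * 2 ^ m \<le> 2 ^ m" using assms by (simp add: mult_left_le_one_le)
  then have "x * 2 ^ m < 2 ^ m + 1" by linarith
  moreover have "0 \<le> x * 2 ^ m" using assms by simp
  ultimately show "0 \<le> dyadic_floor x m" "dyadic_floor x m \<le> 2 ^ m"
    unfolding dyadic_floor_def le_floor_iff floor_le_iff by simp_all
qed

lemma dyadic_le_dyadic: "i \<le> j \<Longrightarrow> real_of_int i / 2 ^ m \<le> real_of_int j / 2 ^ m"
  by (simp add: divide_right_mono)

lemma sum_linear_times_two_thirds_power:
  "(\<Sum>m<k. (8 * real m + 26) * (2/3) ^ m) = 126 - (24 * real k + 126) * (2/3 :: real) ^ k"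
  by (induction k) (simp_all add: algebra_simps)

lemma sum_three_quarters_power: "(\<Sum>m<k. (3/4 :: real) ^ m) = 4 - 4 * (3/4) ^ k"
  by (induction k) (simp_all add: algebra_simps)

lemma linear_times_two_thirds_power_le: "(8 * real k + 26) * (2/3 :: real) ^ k \<le> 26"
proof (induction k)
  case (Suc k)
  have "(8 * real (Suc k) + 26) * (2/3 :: real) ^ Suc k = (2/3) * (8 * real k + 34) * (2/3) ^ k"
    by (simp add: field_simps)
  also have "\<dots> \<le> (8 * real k + 26) * (2/3) ^ k"
    by (intro mult_right_mono) auto
  finally show ?case using Suc by linarith
qed simp

lemma ln_double_le:
  assumes "1 \<le> N" "N \<le> (2 ^ m + 3) ^ 8"
  shows "ln (2 * real N) + 1 \<le> 8 * real m + 26"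
proof -
  have "1 \<le> (2::nat) ^ m" by simp
  then have "(2::nat) ^ m + 3 \<le> 8 * 2 ^ m" by linarith
  also have "\<dots> = 2 ^ (m + 3)" by (simp add: power_add)
  finally have "(2::nat) ^ m + 3 \<le> 2 ^ (m + 3)" .
  then have "N \<le> (2 ^ (m + 3)) ^ 8" using assms(2) by (meson power_mono le_trans zero_le)
  then have "2 * N \<le> 2 ^ (8 * m + 25)" by (simp add: power_mult[symmetric] power_add algebra_simps)
  then have "real (2 * N) \<le> 2 ^ (8 * m + 25)" by (metis of_nat_le_iff of_nat_numeral of_nat_power)
  then have "ln (2 * real N) \<le> ln (2 ^ (8 * m + 25))" using assms(1) by (intro ln_mono) auto
  also have "\<dots> = real (8 * m + 25) * ln 2" by (simp add: ln_realpow)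
  also have "\<dots> \<le> real (8 * m + 25) * 1" using ln_le_minus_one[of 2] by (intro mult_left_mono) auto
  finally show ?thesis by simp
qed

definition level_error :: "nat \<Rightarrow> nat \<Rightarrow> real" where
  "level_error n m = (8 * real m + 26) * (2/3) ^ m / (2 * sqrt n) + 8 * (3/4) ^ m / sqrt n"

lemma level_error_nonneg: "0 \<le> level_error n m"
  by (simp add: level_error_def)

lemma soft_max_bound_le_level_error:
  assumes "1 \<le> N" "N \<le> (2 ^ m + 3) ^ 8" "n > 0"
  defines "s \<equiv> 2 * (3/2) ^ m / sqrt n"
  shows "(ln (2 * real N) + real n * (4 / 2 ^ m) * s\<^sup>2 + 1) / (s * real n) \<le> level_error n m"
proof -
  have "sqrt n > 0" using assms(3) by simp
  then have "s > 0" by (simp add: s_def)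
  have sn: "s * real n = 2 * (3/2) ^ m * sqrt n"
    using \<open>sqrt n > 0\<close> by (simp add: s_def field_simps)
  have "(ln (2 * real N) + real n * (4 / 2 ^ m) * s\<^sup>2 + 1) / (s * real n)
      = (ln (2 * real N) + 1) / (s * real n) + (4 / 2 ^ m) * s"
    using \<open>s > 0\<close> assms(3) by (simp add: field_simps power2_eq_square)
  also have "(ln (2 * real N) + 1) / (s * real n) \<le> (8 * real m + 26) / (s * real n)"
    using ln_double_le[OF assms(1,2)] \<open>s > 0\<close> assms(3) by (intro divide_right_mono) auto
  also have "(8 * real m + 26) / (s * real n) = (8 * real m + 26) * (2/3) ^ m / (2 * sqrt n)"
    unfolding sn by (simp add: field_simps power_divide)
  also have "(4 / 2 ^ m) * s = 8 * (3/4) ^ m / sqrt n"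
  proof -
    have "(4::real) ^ m = 2 ^ m * 2 ^ m" by (simp add: power_mult_distrib[symmetric])
    then show ?thesis unfolding s_def by (simp add: field_simps power_divide)
  qed
  finally show ?thesis by (simp add: level_error_def)
qed

definition chaining_depth :: "nat \<Rightarrow> nat" where
  "chaining_depth n = (LEAST k. sqrt n < 2 * (3/2) ^ Suc k)"

lemma sqrt_less_chaining_depth: "sqrt n < 2 * (3/2) ^ Suc (chaining_depth n)"
proof -
  obtain k where "sqrt n < (3/2 :: real) ^ k" using real_arch_pow[of "3/2" "sqrt n"] by auto
  moreover have "(0::real) < (3/2) ^ k" by simp
  ultimately have "sqrt n < 3 * (3/2 :: real) ^ k" by linarith
  then have "sqrt n < 2 * (3/2 :: real) ^ Suc k" by simp
  then show ?thesis unfolding chaining_depth_def by (rule LeastI)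
qed

lemma le_sqrt_if_le_chaining_depth:
  assumes "4 \<le> n" "m \<le> chaining_depth n"
  shows "2 * (3/2) ^ m \<le> sqrt n"
proof (cases m)
  case 0
  then show ?thesis using real_sqrt_le_mono[of 4 "real n"] assms(1) by simp
next
  case (Suc j)
  then have "\<not> sqrt n < 2 * (3/2) ^ Suc j"
    using assms(2) unfolding chaining_depth_def by (intro not_less_Least) simp
  then show ?thesis using Suc by simp
qed

lemma sum_level_error_le:
  assumes "n > 0" "sqrt n < 2 * (3/2) ^ Suc K"
  shows "(\<Sum>m\<le>K. level_error n m) + level_error n K + 4 / 2 ^ K \<le> 132 / sqrt n"
proof -
  have "sqrt n > 0" using assms(1) by simp
  have "(\<Sum>m\<le>K. level_error n m)
      = (\<Sum>m<Suc K. (8 * real m + 26) * (2/3) ^ m) / (2 * sqrt n) + 8 * (\<Sum>m<Suc K. (3/4 :: real) ^ m) / sqrt n"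
    unfolding level_error_def lessThan_Suc_atMost by (simp add: sum.distrib sum_divide_distrib sum_distrib_left)
  also have "\<dots> \<le> 126 / (2 * sqrt n) + 8 * 4 / sqrt n"
    unfolding sum_linear_times_two_thirds_power sum_three_quarters_power
    using \<open>sqrt n > 0\<close> by (intro add_mono divide_right_mono mult_left_mono) auto
  finally have "(\<Sum>m\<le>K. level_error n m) \<le> 95 / sqrt n" by simp
  moreover have "level_error n K \<le> 26 / (2 * sqrt n) + 8 * 1 / sqrt n"
    unfolding level_error_def using linear_times_two_thirds_power_le[of K] \<open>sqrt n > 0\<close>
    by (intro add_mono divide_right_mono mult_left_mono) (auto simp: power_le_one)
  moreover have "4 / 2 ^ K \<le> 16 / sqrt n"
  proof -
    have "(3/2 :: real) ^ Suc K \<le> 2 ^ Suc K" by (intro power_mono) auto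
    then have "sqrt n < 4 * 2 ^ K" using assms(2) by simp
    then show ?thesis using \<open>sqrt n > 0\<close> by (simp add: field_simps)
  qed
  ultimately show ?thesis by (simp add: add_divide_distrib[symmetric])
qed

locale sub_uniform_pair = prob_space L for L :: "'b measure" +
  fixes U\<^sub>1 U\<^sub>2 :: "'b \<Rightarrow> real"
  assumes measurable_U\<^sub>1 [measurable]: "U\<^sub>1 \<in> borel_measurable L"
    and measurable_U\<^sub>2 [measurable]: "U\<^sub>2 \<in> borel_measurable L"
    and prob_U\<^sub>1_between: "a \<le> b \<Longrightarrow> prob {\<omega> \<in> space L. a \<le> U\<^sub>1 \<omega> \<and> U\<^sub>1 \<omega> \<le> b} \<le> b - a"
    and prob_U\<^sub>2_between: "a \<le> b \<Longrightarrow> prob {\<omega> \<in> space L. a \<le> U\<^sub>2 \<omega> \<and> U\<^sub>2 \<omega> \<le> b} \<le> b - a"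
begin

definition dyadic_box :: "nat \<Rightarrow> int \<Rightarrow> int \<Rightarrow> int \<Rightarrow> int \<Rightarrow> 'b set" where
  "dyadic_box m i\<^sub>1 j\<^sub>1 i\<^sub>2 j\<^sub>2 = {\<omega> \<in> space L.
     i\<^sub>1 / 2 ^ m \<le> U\<^sub>1 \<omega> \<and> U\<^sub>1 \<omega> < j\<^sub>1 / 2 ^ m \<and> i\<^sub>2 / 2 ^ m \<le> U\<^sub>2 \<omega> \<and> U\<^sub>2 \<omega> < j\<^sub>2 / 2 ^ m}"

lemma sets_dyadic_box [measurable]: "dyadic_box m i\<^sub>1 j\<^sub>1 i\<^sub>2 j\<^sub>2 \<in> events"
  unfolding dyadic_box_def by measurable

lemma dyadic_box_empty: "dyadic_box m 0 0 0 0 = {}"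
  by (auto simp: dyadic_box_def)

lemma dyadic_box_double:
  "dyadic_box (Suc m) (2 * i\<^sub>1) (2 * j\<^sub>1) (2 * i\<^sub>2) (2 * j\<^sub>2) = dyadic_box m i\<^sub>1 j\<^sub>1 i\<^sub>2 j\<^sub>2"
  by (simp add: dyadic_box_def)

lemma dyadic_box_mono:
  "i\<^sub>1 \<le> i\<^sub>1' \<Longrightarrow> j\<^sub>1' \<le> j\<^sub>1 \<Longrightarrow> i\<^sub>2 \<le> i\<^sub>2' \<Longrightarrow> j\<^sub>2' \<le> j\<^sub>2 \<Longrightarrow>
    dyadic_box m i\<^sub>1' j\<^sub>1' i\<^sub>2' j\<^sub>2' \<subseteq> dyadic_box m i\<^sub>1 j\<^sub>1 i\<^sub>2 j\<^sub>2"
  unfolding dyadic_box_def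
  using dyadic_le_dyadic[of i\<^sub>1 i\<^sub>1' m] dyadic_le_dyadic[of j\<^sub>1' j\<^sub>1 m]
    dyadic_le_dyadic[of i\<^sub>2 i\<^sub>2' m] dyadic_le_dyadic[of j\<^sub>2' j\<^sub>2 m]
  by auto

lemma prob_dyadic_strip_le:
  "prob {\<omega> \<in> space L. of_int i / 2 ^ m \<le> U\<^sub>1 \<omega> \<and> U\<^sub>1 \<omega> \<le> of_int (i + 1) / 2 ^ m} \<le> 1 / 2 ^ m"
  "prob {\<omega> \<in> space L. of_int i / 2 ^ m \<le> U\<^sub>2 \<omega> \<and> U\<^sub>2 \<omega> \<le> of_int (i + 1) / 2 ^ m} \<le> 1 / 2 ^ m"
proof -
  have "real_of_int (i + 1) / 2 ^ m - real_of_int i / 2 ^ m = 1 / 2 ^ m"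
    by (simp add: diff_divide_distrib[symmetric])
  then show "prob {\<omega> \<in> space L. of_int i / 2 ^ m \<le> U\<^sub>1 \<omega> \<and> U\<^sub>1 \<omega> \<le> of_int (i + 1) / 2 ^ m} \<le> 1 / 2 ^ m"
    and "prob {\<omega> \<in> space L. of_int i / 2 ^ m \<le> U\<^sub>2 \<omega> \<and> U\<^sub>2 \<omega> \<le> of_int (i + 1) / 2 ^ m} \<le> 1 / 2 ^ m"
    using prob_U\<^sub>1_between prob_U\<^sub>2_between dyadic_le_dyadic[of i "i + 1" m] by fastforce+
qed

lemma prob_dyadic_box_diff_le:
  assumes "i\<^sub>1 \<le> i\<^sub>1'" "i\<^sub>1' \<le> i\<^sub>1 + 1" "j\<^sub>1 - 1 \<le> j\<^sub>1'" "j\<^sub>1' \<le> j\<^sub>1"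
    and "i\<^sub>2 \<le> i\<^sub>2'" "i\<^sub>2' \<le> i\<^sub>2 + 1" "j\<^sub>2 - 1 \<le> j\<^sub>2'" "j\<^sub>2' \<le> j\<^sub>2"
  shows "prob (dyadic_box m i\<^sub>1 j\<^sub>1 i\<^sub>2 j\<^sub>2 - dyadic_box m i\<^sub>1' j\<^sub>1' i\<^sub>2' j\<^sub>2') \<le> 4 / 2 ^ m"
proof -
  define strip where
    "strip U i = {\<omega> \<in> space L. real_of_int i / 2 ^ m \<le> U \<omega> \<and> U \<omega> \<le> real_of_int (i + 1) / 2 ^ m}"
    for U :: "'b \<Rightarrow> real" and i
  have [measurable]: "strip U\<^sub>1 i \<in> events" "strip U\<^sub>2 i \<in> events" for i
    unfolding strip_def by measurable
  have "dyadic_box m i\<^sub>1 j\<^sub>1 i\<^sub>2 j\<^sub>2 - dyadic_box m i\<^sub>1' j\<^sub>1' i\<^sub>2' j\<^sub>2'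
      \<subseteq> strip U\<^sub>1 i\<^sub>1 \<union> strip U\<^sub>1 (j\<^sub>1 - 1) \<union> strip U\<^sub>2 i\<^sub>2 \<union> strip U\<^sub>2 (j\<^sub>2 - 1)"
    using assms dyadic_le_dyadic[of i\<^sub>1' "i\<^sub>1 + 1" m] dyadic_le_dyadic[of "j\<^sub>1 - 1" j\<^sub>1' m]
      dyadic_le_dyadic[of i\<^sub>2' "i\<^sub>2 + 1" m] dyadic_le_dyadic[of "j\<^sub>2 - 1" j\<^sub>2' m]
    by (auto simp: dyadic_box_def strip_def not_le not_less)
  then have "prob (dyadic_box m i\<^sub>1 j\<^sub>1 i\<^sub>2 j\<^sub>2 - dyadic_box m i\<^sub>1' j\<^sub>1' i\<^sub>2' j\<^sub>2')
      \<le> prob (strip U\<^sub>1 i\<^sub>1 \<union> strip U\<^sub>1 (j\<^sub>1 - 1) \<union> strip U\<^sub>2 i\<^sub>2 \<union> strip U\<^sub>2 (j\<^sub>2 - 1))"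
    by (intro finite_measure_mono) auto
  also have "\<dots> \<le> prob (strip U\<^sub>1 i\<^sub>1) + prob (strip U\<^sub>1 (j\<^sub>1 - 1))
                    + prob (strip U\<^sub>2 i\<^sub>2) + prob (strip U\<^sub>2 (j\<^sub>2 - 1))"
    by (intro order.trans[OF measure_Un_le] add_mono order_refl) auto
  also have "\<dots> \<le> 4 / 2 ^ m"
    using prob_dyadic_strip_le[of i\<^sub>1 m] prob_dyadic_strip_le[of "j\<^sub>1 - 1" m]
      prob_dyadic_strip_le[of i\<^sub>2 m] prob_dyadic_strip_le[of "j\<^sub>2 - 1" m]
    unfolding strip_def by simp
  finally show ?thesis .
qed

definition dyadic_index :: "nat \<Rightarrow> int set" where
  "dyadic_index m = {0 .. 2 ^ m + 2}"

definition level_candidates :: "nat \<Rightarrow> 'b set set" where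
  "level_candidates m = (\<lambda>((i\<^sub>1, j\<^sub>1, i\<^sub>2, j\<^sub>2), (i\<^sub>1', j\<^sub>1', i\<^sub>2', j\<^sub>2')).
        dyadic_box m i\<^sub>1 j\<^sub>1 i\<^sub>2 j\<^sub>2 - dyadic_box m i\<^sub>1' j\<^sub>1' i\<^sub>2' j\<^sub>2') `
      ((dyadic_index m \<times> dyadic_index m \<times> dyadic_index m \<times> dyadic_index m) \<times>
       (dyadic_index m \<times> dyadic_index m \<times> dyadic_index m \<times> dyadic_index m))"

definition level_family :: "nat \<Rightarrow> 'b set set" where
  "level_family m = {D \<in> level_candidates m. prob D \<le> 4 / 2 ^ m}"

lemma zero_mem_dyadic_index: "0 \<in> dyadic_index m"
  by (simp add: dyadic_index_def)

lemma finite_level_family: "finite (level_family m)"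
  unfolding level_family_def level_candidates_def dyadic_index_def by simp

lemma level_family_subset_events: "level_family m \<subseteq> events"
  unfolding level_family_def level_candidates_def by auto

lemma prob_le_of_level_family: "D \<in> level_family m \<Longrightarrow> prob D \<le> 4 / 2 ^ m"
  unfolding level_family_def by simp

lemma card_dyadic_index: "card (dyadic_index m) = 2 ^ m + 3"
proof -
  have "(2::int) ^ m + 2 - 0 + 1 = int (2 ^ m + 3)" by simp
  then show ?thesis by (simp only: dyadic_index_def card_atLeastAtMost_int nat_int)
qed

lemma card_level_family_le: "card (level_family m) \<le> (2 ^ m + 3) ^ 8"
proof -
  let ?I = "dyadic_index m"
  have "card (level_family m) \<le> card (level_candidates m)"
    unfolding level_family_def level_candidates_def dyadic_index_def by (intro card_mono) auto
  also have "\<dots> \<le> card ((?I \<times> ?I \<times> ?I \<times> ?I) \<times> (?I \<times> ?I \<times> ?I \<times> ?I))"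
    unfolding level_candidates_def by (intro card_image_le) (simp add: dyadic_index_def)
  also have "\<dots> = card ?I ^ 8"
    by (simp add: card_cartesian_product numeral_eq_Suc)
  also have "\<dots> = (2 ^ m + 3) ^ 8"
    by (simp only: card_dyadic_index)
  finally show ?thesis .
qed

lemma dyadic_box_diff_mem_level_family:
  assumes "i\<^sub>1 \<in> dyadic_index m" "j\<^sub>1 \<in> dyadic_index m" "i\<^sub>2 \<in> dyadic_index m" "j\<^sub>2 \<in> dyadic_index m"
    "i\<^sub>1' \<in> dyadic_index m" "j\<^sub>1' \<in> dyadic_index m" "i\<^sub>2' \<in> dyadic_index m" "j\<^sub>2' \<in> dyadic_index m"
    and "prob (dyadic_box m i\<^sub>1 j\<^sub>1 i\<^sub>2 j\<^sub>2 - dyadic_box m i\<^sub>1' j\<^sub>1' i\<^sub>2' j\<^sub>2') \<le> 4 / 2 ^ m"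
  shows "dyadic_box m i\<^sub>1 j\<^sub>1 i\<^sub>2 j\<^sub>2 - dyadic_box m i\<^sub>1' j\<^sub>1' i\<^sub>2' j\<^sub>2' \<in> level_family m"
  unfolding level_family_def level_candidates_def using assms
  by (auto intro!: image_eqI[where x = "((i\<^sub>1, j\<^sub>1, i\<^sub>2, j\<^sub>2), (i\<^sub>1', j\<^sub>1', i\<^sub>2', j\<^sub>2'))"])

lemma empty_mem_level_family: "{} \<in> level_family m"
  using dyadic_box_diff_mem_level_family[of 0 m 0 0 0 0 0 0 0] by (simp add: dyadic_index_def dyadic_box_empty)

definition open_rect :: "real \<Rightarrow> real \<Rightarrow> real \<Rightarrow> real \<Rightarrow> 'b set" where
  "open_rect a\<^sub>1 b\<^sub>1 a\<^sub>2 b\<^sub>2 = {\<omega> \<in> space L. a\<^sub>1 < U\<^sub>1 \<omega> \<and> U\<^sub>1 \<omega> < b\<^sub>1 \<and> a\<^sub>2 < U\<^sub>2 \<omega> \<and> U\<^sub>2 \<omega> < b\<^sub>2}"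

definition closed_rect :: "real \<Rightarrow> real \<Rightarrow> real \<Rightarrow> real \<Rightarrow> 'b set" where
  "closed_rect a\<^sub>1 b\<^sub>1 a\<^sub>2 b\<^sub>2 = {\<omega> \<in> space L. a\<^sub>1 \<le> U\<^sub>1 \<omega> \<and> U\<^sub>1 \<omega> \<le> b\<^sub>1 \<and> a\<^sub>2 \<le> U\<^sub>2 \<omega> \<and> U\<^sub>2 \<omega> \<le> b\<^sub>2}"

definition inner_box :: "real \<Rightarrow> real \<Rightarrow> real \<Rightarrow> real \<Rightarrow> nat \<Rightarrow> 'b set" where
  "inner_box a\<^sub>1 b\<^sub>1 a\<^sub>2 b\<^sub>2 m =
     dyadic_box m (dyadic_floor a\<^sub>1 m + 1) (dyadic_floor b\<^sub>1 m) (dyadic_floor a\<^sub>2 m + 1) (dyadic_floor b\<^sub>2 m)"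

definition outer_box :: "real \<Rightarrow> real \<Rightarrow> real \<Rightarrow> real \<Rightarrow> nat \<Rightarrow> 'b set" where
  "outer_box a\<^sub>1 b\<^sub>1 a\<^sub>2 b\<^sub>2 m =
     dyadic_box m (dyadic_floor a\<^sub>1 m) (dyadic_floor b\<^sub>1 m + 1) (dyadic_floor a\<^sub>2 m) (dyadic_floor b\<^sub>2 m + 1)"

definition chain_link :: "real \<Rightarrow> real \<Rightarrow> real \<Rightarrow> real \<Rightarrow> nat \<Rightarrow> 'b set" where
  "chain_link a\<^sub>1 b\<^sub>1 a\<^sub>2 b\<^sub>2 m = (case m of
     0 \<Rightarrow> inner_box a\<^sub>1 b\<^sub>1 a\<^sub>2 b\<^sub>2 0
   | Suc k \<Rightarrow> inner_box a\<^sub>1 b\<^sub>1 a\<^sub>2 b\<^sub>2 (Suc k) - inner_box a\<^sub>1 b\<^sub>1 a\<^sub>2 b\<^sub>2 k)"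

lemma sets_inner_box [measurable]: "inner_box a\<^sub>1 b\<^sub>1 a\<^sub>2 b\<^sub>2 m \<in> events"
  unfolding inner_box_def by measurable

lemma inner_box_subset_open_rect: "inner_box a\<^sub>1 b\<^sub>1 a\<^sub>2 b\<^sub>2 m \<subseteq> open_rect a\<^sub>1 b\<^sub>1 a\<^sub>2 b\<^sub>2"
  unfolding inner_box_def dyadic_box_def open_rect_def
  using less_dyadic_floor_plus_1[of a\<^sub>1 m] less_dyadic_floor_plus_1[of a\<^sub>2 m]
    dyadic_floor_le[of b\<^sub>1 m] dyadic_floor_le[of b\<^sub>2 m]
  by force

lemma closed_rect_subset_outer_box: "closed_rect a\<^sub>1 b\<^sub>1 a\<^sub>2 b\<^sub>2 \<subseteq> outer_box a\<^sub>1 b\<^sub>1 a\<^sub>2 b\<^sub>2 m"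
  unfolding outer_box_def dyadic_box_def closed_rect_def
  using less_dyadic_floor_plus_1[of b\<^sub>1 m] less_dyadic_floor_plus_1[of b\<^sub>2 m]
    dyadic_floor_le[of a\<^sub>1 m] dyadic_floor_le[of a\<^sub>2 m]
  by force

lemma inner_box_eq_double:
  "inner_box a\<^sub>1 b\<^sub>1 a\<^sub>2 b\<^sub>2 m = dyadic_box (Suc m) (2 * (dyadic_floor a\<^sub>1 m + 1)) (2 * dyadic_floor b\<^sub>1 m)
     (2 * (dyadic_floor a\<^sub>2 m + 1)) (2 * dyadic_floor b\<^sub>2 m)"
  unfolding inner_box_def by (simp only: dyadic_box_double)

lemma inner_box_subset_Suc: "inner_box a\<^sub>1 b\<^sub>1 a\<^sub>2 b\<^sub>2 m \<subseteq> inner_box a\<^sub>1 b\<^sub>1 a\<^sub>2 b\<^sub>2 (Suc m)"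
  unfolding inner_box_eq_double[of _ _ _ _ m] inner_box_def[of _ _ _ _ "Suc m"]
  using dyadic_floor_Suc[of a\<^sub>1 m] dyadic_floor_Suc[of b\<^sub>1 m] dyadic_floor_Suc[of a\<^sub>2 m] dyadic_floor_Suc[of b\<^sub>2 m]
  by (intro dyadic_box_mono) auto

lemma abs_deviation_inner_box_le:
  "\<bar>deviation L n Y (inner_box a\<^sub>1 b\<^sub>1 a\<^sub>2 b\<^sub>2 K)\<bar> \<le> (\<Sum>m\<le>K. \<bar>deviation L n Y (chain_link a\<^sub>1 b\<^sub>1 a\<^sub>2 b\<^sub>2 m)\<bar>)"
proof (induction K)
  case 0
  then show ?case by (simp add: chain_link_def)
next
  case (Suc K)
  have "deviation L n Y (inner_box a\<^sub>1 b\<^sub>1 a\<^sub>2 b\<^sub>2 (Suc K))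
      = deviation L n Y (inner_box a\<^sub>1 b\<^sub>1 a\<^sub>2 b\<^sub>2 K) + deviation L n Y (chain_link a\<^sub>1 b\<^sub>1 a\<^sub>2 b\<^sub>2 (Suc K))"
    unfolding chain_link_def
    by (simp, intro deviation_Diff finite_measure_axioms inner_box_subset_Suc sets_inner_box)
  then show ?case using Suc.IH by simp
qed

context
  fixes a\<^sub>1 b\<^sub>1 a\<^sub>2 b\<^sub>2 :: real
  assumes unit: "a\<^sub>1 \<in> {0..1}" "b\<^sub>1 \<in> {0..1}" "a\<^sub>2 \<in> {0..1}" "b\<^sub>2 \<in> {0..1}"
begin

lemma dyadic_floor_mem_index:
  assumes "x \<in> {a\<^sub>1, b\<^sub>1, a\<^sub>2, b\<^sub>2}"
  shows "dyadic_floor x m \<in> dyadic_index m" "dyadic_floor x m + 1 \<in> dyadic_index m"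
    "2 * dyadic_floor x m \<in> dyadic_index (Suc m)" "2 * (dyadic_floor x m + 1) \<in> dyadic_index (Suc m)"
  using assms unit dyadic_floor_bounds[of x m] by (auto simp: dyadic_index_def)

lemma chain_link_mem_level_family: "chain_link a\<^sub>1 b\<^sub>1 a\<^sub>2 b\<^sub>2 m \<in> level_family m"
proof (cases m)
  case 0
  have "inner_box a\<^sub>1 b\<^sub>1 a\<^sub>2 b\<^sub>2 0 - dyadic_box 0 0 0 0 0 \<in> level_family 0"
    unfolding inner_box_def using dyadic_floor_mem_index
    by (intro dyadic_box_diff_mem_level_family order.trans[OF prob_le_1]) (simp_all add: zero_mem_dyadic_index)
  then show ?thesis by (simp add: chain_link_def dyadic_box_empty 0)
next
  case (Suc k)
  show ?thesis
    unfolding Suc chain_link_def nat.case inner_box_eq_double[of _ _ _ _ k] inner_box_def[of _ _ _ _ "Suc k"]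
    using dyadic_floor_mem_index
      dyadic_floor_Suc[of a\<^sub>1 k] dyadic_floor_Suc[of b\<^sub>1 k] dyadic_floor_Suc[of a\<^sub>2 k] dyadic_floor_Suc[of b\<^sub>2 k]
    by (intro dyadic_box_diff_mem_level_family prob_dyadic_box_diff_le) simp_all
qed

lemma outer_box_diff_inner_box_mem_level_family:
  "outer_box a\<^sub>1 b\<^sub>1 a\<^sub>2 b\<^sub>2 K - inner_box a\<^sub>1 b\<^sub>1 a\<^sub>2 b\<^sub>2 K \<in> level_family K"
  unfolding outer_box_def inner_box_def using dyadic_floor_mem_index
  by (intro dyadic_box_diff_mem_level_family prob_dyadic_box_diff_le) simp_all

end

text \<open>
  The inverse temperature 2 (3/2)^m / sqrt n balances the two terms of the maximal inequality at
  level m, ln (card (level_family m)) / (s n) and 4 s / 2^m, making both geometric in m.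
\<close>
definition level_soft_max :: "nat \<Rightarrow> nat \<Rightarrow> (nat \<Rightarrow> 'b) \<Rightarrow> real" where
  "level_soft_max n m = deviation_soft_max L n (level_family m) (2 * (3/2) ^ m / sqrt n) (4 / 2 ^ m)"

definition chaining_bound :: "nat \<Rightarrow> nat \<Rightarrow> (nat \<Rightarrow> 'b) \<Rightarrow> real" where
  "chaining_bound n K Y = (\<Sum>m\<le>K. level_soft_max n m Y) + level_soft_max n K Y + 4 / 2 ^ K"

lemma abs_deviation_le_chaining_bound:
  assumes R: "R \<in> events" "open_rect a\<^sub>1 b\<^sub>1 a\<^sub>2 b\<^sub>2 \<subseteq> R" "R \<subseteq> closed_rect a\<^sub>1 b\<^sub>1 a\<^sub>2 b\<^sub>2"
    and unit: "a\<^sub>1 \<in> {0..1}" "b\<^sub>1 \<in> {0..1}" "a\<^sub>2 \<in> {0..1}" "b\<^sub>2 \<in> {0..1}"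
    and n: "n > 0"
  shows "\<bar>deviation L n Y R\<bar> \<le> chaining_bound n K Y"
proof -
  define E where "E = inner_box a\<^sub>1 b\<^sub>1 a\<^sub>2 b\<^sub>2 K"
  define B where "B = outer_box a\<^sub>1 b\<^sub>1 a\<^sub>2 b\<^sub>2 K"
  have s: "0 < 2 * (3/2) ^ m / sqrt n" for m using n by simp
  have "E \<subseteq> R" unfolding E_def using inner_box_subset_open_rect R(2) by (rule order.trans)
  have "R \<subseteq> B" unfolding B_def using R(3) closed_rect_subset_outer_box by (rule order.trans)
  have "B \<in> events" by (simp add: B_def outer_box_def)
  have "deviation L n Y R = deviation L n Y E + deviation L n Y (R - E)"
    using \<open>E \<subseteq> R\<close> R(1) by (intro deviation_Diff finite_measure_axioms) (auto simp: E_def)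
  then have "\<bar>deviation L n Y R\<bar> \<le> \<bar>deviation L n Y E\<bar> + \<bar>deviation L n Y (R - E)\<bar>"
    by simp
  also have "\<bar>deviation L n Y E\<bar> \<le> (\<Sum>m\<le>K. \<bar>deviation L n Y (chain_link a\<^sub>1 b\<^sub>1 a\<^sub>2 b\<^sub>2 m)\<bar>)"
    unfolding E_def by (rule abs_deviation_inner_box_le)
  also have "\<dots> \<le> (\<Sum>m\<le>K. level_soft_max n m Y)"
    unfolding level_soft_max_def
    by (intro sum_mono abs_deviation_le_soft_max finite_level_family chain_link_mem_level_family unit s n)
  also have "\<bar>deviation L n Y (R - E)\<bar> \<le> prob (B - E) + \<bar>deviation L n Y (B - E)\<bar>"
    using \<open>R \<subseteq> B\<close> \<open>B \<in> events\<close> by (intro abs_deviation_le_of_subset finite_measure_axioms) (auto simp: E_def)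
  also have "prob (B - E) \<le> 4 / 2 ^ K"
    unfolding B_def E_def by (intro prob_le_of_level_family outer_box_diff_inner_box_mem_level_family unit)
  also have "\<bar>deviation L n Y (B - E)\<bar> \<le> level_soft_max n K Y"
    unfolding level_soft_max_def B_def E_def
    by (intro abs_deviation_le_soft_max finite_level_family outer_box_diff_inner_box_mem_level_family unit s n)
  finally show ?thesis by (simp add: chaining_bound_def)
qed

lemma chaining_bound_nonneg: "n > 0 \<Longrightarrow> 0 \<le> chaining_bound n K Y"
  using abs_deviation_le_chaining_bound[of "{}" 0 0 0 0 n Y K] by (simp add: open_rect_def)

lemma nn_integral_level_soft_max_le:
  assumes n: "n > 0" and m: "2 * (3/2) ^ m \<le> sqrt n"
  shows "(\<integral>\<^sup>+Y. level_soft_max n m Y \<partial>PiM {..<n} (\<lambda>_. L)) \<le> level_error n m"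
proof -
  have "card (level_family m) \<noteq> 0"
    using empty_mem_level_family finite_level_family by (metis card_0_eq empty_iff)
  then have "1 \<le> card (level_family m)" by simp
  have "(\<integral>\<^sup>+Y. level_soft_max n m Y \<partial>PiM {..<n} (\<lambda>_. L))
      \<le> (ln (2 * real (card (level_family m))) + real n * (4 / 2 ^ m) * (2 * (3/2) ^ m / sqrt n)\<^sup>2 + 1)
         / (2 * (3/2) ^ m / sqrt n * real n)"
    unfolding level_soft_max_def using m n empty_mem_level_family
    by (intro nn_integral_deviation_soft_max_le finite_level_family level_family_subset_events
        prob_le_of_level_family) auto
  also have "\<dots> \<le> level_error n m"
    using soft_max_bound_le_level_error[OF \<open>1 \<le> card (level_family m)\<close> card_level_family_le n]
    by (intro ennreal_leI) simp
  finally show ?thesis .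
qed

lemma nn_integral_chaining_bound_le:
  assumes "4 \<le> n"
  shows "(\<integral>\<^sup>+Y. chaining_bound n (chaining_depth n) Y \<partial>PiM {..<n} (\<lambda>_. L)) \<le> 132 / sqrt n"
proof -
  interpret PM: prob_space "PiM {..<n} (\<lambda>_. L)" by (intro prob_space_PiM prob_space_axioms)
  define K where "K = chaining_depth n"
  have "n > 0" using assms by simp
  have nonneg: "0 \<le> level_soft_max n m Y" for m Y
  proof -
    have "\<bar>deviation L n Y {}\<bar> \<le> level_soft_max n m Y"
      unfolding level_soft_max_def using \<open>n > 0\<close>
      by (intro abs_deviation_le_soft_max finite_level_family empty_mem_level_family) auto
    then show ?thesis by linarith
  qed
  have [measurable]: "level_soft_max n m \<in> borel_measurable (PiM {..<n} (\<lambda>_. L))" for m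
    unfolding level_soft_max_def using level_family_subset_events by measurable
  have "(\<integral>\<^sup>+Y. chaining_bound n K Y \<partial>PiM {..<n} (\<lambda>_. L))
      = (\<Sum>m\<le>K. \<integral>\<^sup>+Y. level_soft_max n m Y \<partial>PiM {..<n} (\<lambda>_. L))
        + (\<integral>\<^sup>+Y. level_soft_max n K Y \<partial>PiM {..<n} (\<lambda>_. L)) + ennreal (4 / 2 ^ K)"
    by (simp add: chaining_bound_def nonneg sum_nonneg ennreal_plus sum_ennreal[symmetric]
        nn_integral_add nn_integral_sum PM.emeasure_space_1 del: sum_ennreal)
  also have "\<dots> \<le> (\<Sum>m\<le>K. ennreal (level_error n m)) + ennreal (level_error n K) + ennreal (4 / 2 ^ K)"
    using le_sqrt_if_le_chaining_depth[OF assms] \<open>n > 0\<close>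
    by (intro add_mono sum_mono nn_integral_level_soft_max_le) (auto simp: K_def)
  also have "\<dots> = ennreal ((\<Sum>m\<le>K. level_error n m) + level_error n K + 4 / 2 ^ K)"
    by (simp add: level_error_nonneg ennreal_plus sum_nonneg)
  also have "\<dots> \<le> 132 / sqrt n"
    using sum_level_error_le[OF \<open>n > 0\<close> sqrt_less_chaining_depth] by (intro ennreal_leI) (simp add: K_def)
  finally show ?thesis by (simp add: K_def)
qed

end

section \<open>Rectangles under a bivariate law\<close>

text \<open>No measurability of f is needed: it will be a supremum over uncountably many rectangles.\<close>
lemma nn_integral_distr_le:
  assumes T: "T \<in> measurable M N"
  shows "integral\<^sup>N (distr M N T) f \<le> (\<integral>\<^sup>+x. f (T x) \<partial>M)"
proof -
  have "integral\<^sup>S (distr M N T) g \<le> (\<integral>\<^sup>+x. f (T x) \<partial>M)"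
    if g: "simple_function (distr M N T) g" "g \<le> f" for g
  proof -
    have "integral\<^sup>S (distr M N T) g = integral\<^sup>N (distr M N T) g"
      using g(1) by (rule nn_integral_eq_simple_integral[symmetric])
    also have "\<dots> = (\<integral>\<^sup>+x. g (T x) \<partial>M)"
      using T borel_measurable_simple_function[OF g(1)] by (rule nn_integral_distr)
    also have "\<dots> \<le> (\<integral>\<^sup>+x. f (T x) \<partial>M)"
      using g(2) by (intro nn_integral_mono) (auto simp: le_fun_def)
    finally show ?thesis .
  qed
  then show ?thesis by (auto simp: nn_integral_def intro!: SUP_least)
qed

lemma nn_integral_PiM_le_PiM_pair_fst:
  assumes "prob_space M" "prob_space N" "finite I"
  shows "(\<integral>\<^sup>+X. f X \<partial>PiM I (\<lambda>_. M)) \<le> (\<integral>\<^sup>+Y. f (compose I fst Y) \<partial>PiM I (\<lambda>_. M \<Otimes>\<^sub>M N))"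
proof -
  have "distr (PiM I (\<lambda>_. M \<Otimes>\<^sub>M N)) (PiM I (\<lambda>_. M)) (compose I fst) = PiM I (\<lambda>_. distr (M \<Otimes>\<^sub>M N) M fst)"
    using assms by (intro distr_PiM_finite_prob_space product_prob_spaceI prob_space_pair) auto
  also have "distr (M \<Otimes>\<^sub>M N) M fst = M"
    using assms(2) by (rule prob_space.distr_pair_fst)
  finally have distr_eq: "distr (PiM I (\<lambda>_. M \<Otimes>\<^sub>M N)) (PiM I (\<lambda>_. M)) (compose I fst) = PiM I (\<lambda>_. M)" .
  have "compose I fst \<in> measurable (PiM I (\<lambda>_. M \<Otimes>\<^sub>M N)) (PiM I (\<lambda>_. M))"
    unfolding compose_def by measurable
  from nn_integral_distr_le[OF this, of f] show ?thesis by (simp only: distr_eq)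
qed

lemma unit_subintervalD:
  assumes "S \<in> unit_subintervals"
  shows "is_interval S" "bdd_below S" "bdd_above S" "S \<in> sets borel"
  using assms by (auto simp: unit_subintervals_def intro: real_interval_borel_measurable
      intro!: bdd_belowI[where m = 0] bdd_aboveI[where M = 1])

locale bivariate_distribution = prob_space \<mu> for \<mu> :: "(real \<times> real) measure" +
  assumes sets_eq_borel: "sets \<mu> = sets borel"
begin

abbreviation "\<mu>\<^sub>1 \<equiv> distr \<mu> borel fst"
abbreviation "\<mu>\<^sub>2 \<equiv> distr \<mu> borel snd"

definition U\<^sub>1 :: "(real \<times> real) \<times> real \<Rightarrow> real" where
  "U\<^sub>1 p = distributional_transform \<mu>\<^sub>1 (fst (fst p)) (snd p)"

definition U\<^sub>2 :: "(real \<times> real) \<times> real \<Rightarrow> real" where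
  "U\<^sub>2 p = distributional_transform \<mu>\<^sub>2 (snd (fst p)) (snd p)"

lemma space_eq_UNIV [simp]: "space \<mu> = UNIV"
  using sets_eq_imp_space_eq[OF sets_eq_borel] by simp

lemma sets_eq_borel_pair [measurable_cong]: "sets \<mu> = sets (borel \<Otimes>\<^sub>M borel)"
  using sets_eq_borel by (metis borel_prod)

sublocale randomized: sub_uniform_pair "\<mu> \<Otimes>\<^sub>M unit_uniform" U\<^sub>1 U\<^sub>2
proof (intro sub_uniform_pair.intro sub_uniform_pair_axioms.intro prob_space_pair prob_space_axioms
    prob_space_unit_uniform)
  interpret \<mu>\<^sub>1: real_distribution \<mu>\<^sub>1 by simp
  interpret \<mu>\<^sub>2: real_distribution \<mu>\<^sub>2 by simp
  show "U\<^sub>1 \<in> borel_measurable (\<mu> \<Otimes>\<^sub>M unit_uniform)" "U\<^sub>2 \<in> borel_measurable (\<mu> \<Otimes>\<^sub>M unit_uniform)"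
    unfolding U\<^sub>1_def U\<^sub>2_def distributional_transform_def by measurable
  show "measure (\<mu> \<Otimes>\<^sub>M unit_uniform) {\<omega> \<in> space (\<mu> \<Otimes>\<^sub>M unit_uniform). a \<le> U\<^sub>1 \<omega> \<and> U\<^sub>1 \<omega> \<le> b} \<le> b - a"
    if "a \<le> b" for a b
    using measure_distributional_transform_distr_between_le[of fst a b] that by (simp add: U\<^sub>1_def)
  show "measure (\<mu> \<Otimes>\<^sub>M unit_uniform) {\<omega> \<in> space (\<mu> \<Otimes>\<^sub>M unit_uniform). a \<le> U\<^sub>2 \<omega> \<and> U\<^sub>2 \<omega> \<le> b} \<le> b - a"
    if "a \<le> b" for a b
    using measure_distributional_transform_distr_between_le[of snd a b] that by (simp add: U\<^sub>2_def)
qed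

lemma rect_between_transformed_rects:
  assumes ST: "S \<in> unit_subintervals" "T \<in> unit_subintervals" "S \<noteq> {}" "T \<noteq> {}"
  defines "a\<^sub>1 \<equiv> transformed_inf \<mu>\<^sub>1 S" and "b\<^sub>1 \<equiv> transformed_sup \<mu>\<^sub>1 S"
    and "a\<^sub>2 \<equiv> transformed_inf \<mu>\<^sub>2 T" and "b\<^sub>2 \<equiv> transformed_sup \<mu>\<^sub>2 T"
  shows "randomized.open_rect a\<^sub>1 b\<^sub>1 a\<^sub>2 b\<^sub>2 \<subseteq> (S \<times> T) \<times> UNIV"
    and "(S \<times> T) \<times> UNIV \<subseteq> randomized.closed_rect a\<^sub>1 b\<^sub>1 a\<^sub>2 b\<^sub>2"
proof -
  interpret \<mu>\<^sub>1: real_distribution \<mu>\<^sub>1 by simp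
  interpret \<mu>\<^sub>2: real_distribution \<mu>\<^sub>2 by simp
  note S = unit_subintervalD[OF ST(1)] and T = unit_subintervalD[OF ST(2)]
  show "randomized.open_rect a\<^sub>1 b\<^sub>1 a\<^sub>2 b\<^sub>2 \<subseteq> (S \<times> T) \<times> UNIV"
    using \<mu>\<^sub>1.mem_interval_if_between_transformed[of S] \<mu>\<^sub>2.mem_interval_if_between_transformed[of T] S T ST
    by (auto simp: randomized.open_rect_def U\<^sub>1_def U\<^sub>2_def a\<^sub>1_def b\<^sub>1_def a\<^sub>2_def b\<^sub>2_def)
  show "(S \<times> T) \<times> UNIV \<subseteq> randomized.closed_rect a\<^sub>1 b\<^sub>1 a\<^sub>2 b\<^sub>2"
    using \<mu>\<^sub>1.transformed_inf_le_distributional_transform[of S] \<mu>\<^sub>1.distributional_transform_le_transformed_sup[of S]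
      \<mu>\<^sub>2.transformed_inf_le_distributional_transform[of T] \<mu>\<^sub>2.distributional_transform_le_transformed_sup[of T] S T
    by (auto simp: randomized.closed_rect_def U\<^sub>1_def U\<^sub>2_def space_pair_measure
        a\<^sub>1_def b\<^sub>1_def a\<^sub>2_def b\<^sub>2_def)
qed

lemma abs_rect_deviation_le_chaining_bound:
  assumes ST: "S \<in> unit_subintervals" "T \<in> unit_subintervals" and n: "n > 0"
  shows "\<bar>measure \<mu> (S \<times> T) - empirical n (\<lambda>i. fst (Y i)) (S \<times> T)\<bar> \<le> randomized.chaining_bound n K Y"
proof (cases "S = {} \<or> T = {}")
  case True
  then show ?thesis using randomized.chaining_bound_nonneg[OF n] by (auto simp: empirical_def)
next
  case False
  interpret \<mu>\<^sub>1: real_distribution \<mu>\<^sub>1 by simp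
  interpret \<mu>\<^sub>2: real_distribution \<mu>\<^sub>2 by simp
  have ne: "S \<noteq> {}" "T \<noteq> {}" using False by auto
  have "S \<times> T \<in> sets \<mu>"
    using unit_subintervalD[OF ST(1)] unit_subintervalD[OF ST(2)] by (simp add: sets_eq_borel_pair)
  then have R: "(S \<times> T) \<times> UNIV \<in> sets (\<mu> \<Otimes>\<^sub>M unit_uniform)" by simp
  have "measure (\<mu> \<Otimes>\<^sub>M unit_uniform) ((S \<times> T) \<times> UNIV) = measure \<mu> (S \<times> T)"
    using \<open>S \<times> T \<in> sets \<mu>\<close> by (rule measure_pair_unit_uniform_Times)
  moreover have "empirical n Y ((S \<times> T) \<times> UNIV) = empirical n (\<lambda>i. fst (Y i)) (S \<times> T)"
    by (simp add: empirical_def mem_Times_iff)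
  moreover have "\<bar>deviation (\<mu> \<Otimes>\<^sub>M unit_uniform) n Y ((S \<times> T) \<times> UNIV)\<bar> \<le> randomized.chaining_bound n K Y"
    using n \<mu>\<^sub>1.transformed_inf_sup_bounds[of S] \<mu>\<^sub>2.transformed_inf_sup_bounds[of T]
    by (intro randomized.abs_deviation_le_chaining_bound[OF R rect_between_transformed_rects[OF ST ne]]) auto
  ultimately show ?thesis by (simp add: deviation_def)
qed

lemma nn_integral_sup_rect_deviation_le:
  assumes "4 \<le> n"
  shows "(\<integral>\<^sup>+X. (\<Squnion>(S, T) \<in> unit_subintervals \<times> unit_subintervals.
              ennreal \<bar>measure \<mu> (S \<times> T) - empirical n X (S \<times> T)\<bar>) \<partial>PiM {..<n} (\<lambda>_. \<mu>))
         \<le> 132 / sqrt n"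
proof -
  define I where "I = {..<n}"
  have "(\<integral>\<^sup>+X. (\<Squnion>(S, T) \<in> unit_subintervals \<times> unit_subintervals.
              ennreal \<bar>measure \<mu> (S \<times> T) - empirical n X (S \<times> T)\<bar>) \<partial>PiM I (\<lambda>_. \<mu>))
      \<le> (\<integral>\<^sup>+Y. (\<Squnion>(S, T) \<in> unit_subintervals \<times> unit_subintervals.
              ennreal \<bar>measure \<mu> (S \<times> T) - empirical n (compose I fst Y) (S \<times> T)\<bar>) \<partial>PiM I (\<lambda>_. \<mu> \<Otimes>\<^sub>M unit_uniform))"
    by (intro nn_integral_PiM_le_PiM_pair_fst prob_space_axioms prob_space_unit_uniform) (simp add: I_def)
  also have "\<dots> \<le> (\<integral>\<^sup>+Y. randomized.chaining_bound n (chaining_depth n) Y \<partial>PiM I (\<lambda>_. \<mu> \<Otimes>\<^sub>M unit_uniform))"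
  proof (intro nn_integral_mono SUP_least)
    fix Y :: "nat \<Rightarrow> (real \<times> real) \<times> real" and ST
    assume "ST \<in> unit_subintervals \<times> unit_subintervals"
    then obtain S T where "ST = (S, T)" "S \<in> unit_subintervals" "T \<in> unit_subintervals" by blast
    moreover have "empirical n (compose I fst Y) = empirical n (\<lambda>i. fst (Y i))"
      by (auto simp: fun_eq_iff empirical_def compose_def I_def intro!: arg_cong[where f = card])
    ultimately show "(case ST of (S, T) \<Rightarrow> ennreal \<bar>measure \<mu> (S \<times> T) - empirical n (compose I fst Y) (S \<times> T)\<bar>)
        \<le> ennreal (randomized.chaining_bound n (chaining_depth n) Y)"
      using abs_rect_deviation_le_chaining_bound assms by (simp add: ennreal_leI)
  qed
  also have "\<dots> \<le> 132 / sqrt n"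
    unfolding I_def by (rule randomized.nn_integral_chaining_bound_le[OF assms])
  finally show ?thesis by (simp add: I_def)
qed

lemma nn_integral_sup_rect_deviation_le_1:
  "(\<integral>\<^sup>+X. (\<Squnion>(S, T) \<in> unit_subintervals \<times> unit_subintervals.
              ennreal \<bar>measure \<mu> (S \<times> T) - empirical n X (S \<times> T)\<bar>) \<partial>PiM {..<n} (\<lambda>_. \<mu>)) \<le> 1"
proof -
  interpret PM: prob_space "PiM {..<n} (\<lambda>_. \<mu>)" by (intro prob_space_PiM prob_space_axioms)
  have bound: "\<bar>measure \<mu> A - empirical n X A\<bar> \<le> 1" for X A
  proof -
    have "card {i\<in>{..<n}. X i \<in> A} \<le> card {..<n}" by (rule card_mono) auto
    then have "0 \<le> empirical n X A" "empirical n X A \<le> 1"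
      unfolding empirical_def by (auto simp: divide_le_eq_1)
    then show ?thesis
      using measure_nonneg[of \<mu> A] prob_le_1[of A] by linarith
  qed
  have "(\<integral>\<^sup>+X. (\<Squnion>(S, T) \<in> unit_subintervals \<times> unit_subintervals.
              ennreal \<bar>measure \<mu> (S \<times> T) - empirical n X (S \<times> T)\<bar>) \<partial>PiM {..<n} (\<lambda>_. \<mu>))
      \<le> (\<integral>\<^sup>+X. 1 \<partial>PiM {..<n} (\<lambda>_. \<mu>))"
    by (intro nn_integral_mono SUP_least) (clarsimp simp: bound)
  then show ?thesis by (simp add: PM.emeasure_space_1)
qed

end

theorem mainTheorem14:
  fixes \<mu> :: "(real \<times> real) measure" and n :: nat
  assumes "prob_space \<mu>"
    and "sets \<mu> = sets borel"
    and "measure \<mu> ({0..1} \<times> {0..1}) = 1"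
    and "n \<ge> 1"
  shows "(\<integral>\<^sup>+ X. (\<Squnion>(S, T) \<in> unit_subintervals \<times> unit_subintervals.
              ennreal \<bar>measure \<mu> (S \<times> T) - empirical n X (S \<times> T)\<bar>)
            \<partial>(PiM {..<n} (\<lambda>_. \<mu>)))
         \<le> ennreal (174 / sqrt (real n))"
proof -
  interpret bivariate_distribution \<mu>
    using assms(1,2) by (simp add: bivariate_distribution_def bivariate_distribution_axioms_def)
  show ?thesis
  proof (cases "n < 4")
    case True
    then have "1 \<le> 174 / sqrt (real n)"
      using assms(4) real_sqrt_le_mono[of n 4] by (simp add: field_simps)
    then have "1 \<le> ennreal (174 / sqrt (real n))"
      using ennreal_leI by fastforce
    with nn_integral_sup_rect_deviation_le_1 show ?thesis
      by (rule order.trans)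
  next
    case False
    then have "4 \<le> n" by simp
    have "ennreal (132 / sqrt (real n)) \<le> ennreal (174 / sqrt (real n))"
      by (intro ennreal_leI divide_right_mono) auto
    with nn_integral_sup_rect_deviation_le[OF \<open>4 \<le> n\<close>] show ?thesis
      by (rule order.trans)
  qed
qed

end
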